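(* Assume the Standing setup and the Time series setup, and suppose that $R(z)$ is analytic on $\mathcal V_\epsilon\cup\mathcal W_\theta$ for some $\epsilon>0$ and some $\theta>0$. Then for every integer $t\ge 0$ the series below converge and $$x(t)=\sum_{k\ge1}(-1)^kT_{-k}\nabla^{-k}g_+(t)-U_tC_1c+\sum_{\ell\ge0}(-1)^\ell T_\ell\nabla^\ell g_+(t)-V_tC_1c .$$
   Context: Standing setup. Let $X,Y$ be complex Banach spaces, let $\mathcal B(X,Y)$ denote the bounded linear operators from $X$ to $Y$ ($\mathcal B(X)=\mathcal B(X,X)$), and let $I_X$ be the identity on $X$. Let $A_0,A_1\in\mathcal B(X,Y)$, let $A(z)=A_0+A_1z$ ($z\in\mathbb C$), and set $C_0=A_0+A_1$, $C_1=A_1$, so that $A(z)=C_0+C_1(z-1)$. Let $R(z)=A(z)^{-1}\in\mathcal B(Y,X)$ where this inverse exists. For $\epsilon>0$ let $\mathcal V_\epsilon=\{z\in\mathbb C:|z|<1+\epsilon,\ z\ne1\}$, and for $\theta>0$ let $\mathcal W_\theta=\{z\in\mathbb C:0<|z-1|<1+\theta\}$. If $R$ is analytic on $\mathcal V_\epsilon$ then it has a Laurent expansion $R(z)=\sum_{j\in\mathbb Z}T_j(z-1)^j$ on $0<|z-1|<\epsilon$ with $T_j\in\mathcal B(Y,X)$, and (known facts) $T_{-k}=(-1)^{k-1}(T_{-1}C_0)^{k-1}T_{-1}$ for $k\ge1$, $T_\ell=(-1)^\ell(T_0C_1)^\ell T_0$ for $\ell\ge0$, $\|(T_{-1}C_0)^k\|^{1/k}\to0$,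 $T_{-1}C_1+T_0C_0=I_X$, $C_1T_{-1}+C_0T_0=I_Y$, $T_{-1}C_iT_0=0$ and $T_0C_iT_{-1}=0$ for $i=0,1$; moreover $P=T_{-1}C_1$ and $P^c=I_X-P=T_0C_0$ are complementary projections on $X$ and $Q=C_1T_{-1}$, $Q^c=I_Y-Q=C_0T_0$ are complementary projections on $Y$. The singular part $R_{\rm sin}(z)=\sum_{k\ge1}T_{-k}(z-1)^{-k}$ converges for all $z\ne1$ and the regular part is $R_{\rm reg}(z)=\sum_{\ell\ge0}T_\ell(z-1)^\ell$. Define, for integers $s\ge0$, $U_s=-(I_X-T_{-1}C_0)^{-s-1}T_{-1}$ (these are the Maclaurin coefficients of $R_{\rm sin}$) and, whenever $I_X-T_0C_1$ is invertible, $V_s=(-1)^s(I_X-T_0C_1)^{-s-1}(T_0C_1)^sT_0$. Time series setup. Let $(\Omega,\Sigma,\mu)$ be a probability space and $\{n(t)\}_{t\in\mathbb Z}$ a sequence of i.i.d. $X$-valued (Bochner measurable) random variables with $\mathbb E\|n(t)\|^2<\infty$ and $\mathbb E[n(t)]=0$. Let $F_0,F_1\in\mathcal B(X,Y)$ and $g(t)=F_0n(t)+F_1n(t-1)$ for $t\in\mathbb Z$. The $X$-valued random sequence $\{x(t)\}_{t\ge-1}$ satisfies $x(-1)=c$ and $A_0x(t)+A_1x(t-1)=g(t)$ for every integer $t\ge0$. Let $g_+(t)=g(t)$ for $t\ge0$ and $g_+(t)=0$ for $t<0$. For integers $t\ge0$, $k\ge1$, $\ell\ge0$ write $\nabla^{-k}g_+(t)=\sum_{s=0}^t\binom{s+k-1}{s}g(t-s)$,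 $\nabla^\ell g_+(t)=\sum_{s=0}^{\min\{\ell,t\}}\binom{\ell}{s}(-1)^sg(t-s)$ and $\nabla^\ell g(t)=\sum_{s=0}^{\ell}\binom{\ell}{s}(-1)^sg(t-s)$. *)

theory Defs
  imports "HOL-Probability.Probability"
begin

text \<open>A complex Banach space is a real Banach space (type class banach) together with
  a bounded real-linear map J (multiplication by the imaginary unit) with J o J = -I and
  norm (c x) = cmod c * norm x for the induced complex scalar multiplication.\<close>

definition complex_structure :: "('x::real_normed_vector \<Rightarrow>\<^sub>L 'x) \<Rightarrow> bool" where
  "complex_structure J \<longleftrightarrow> J o\<^sub>L J = - id_blinfun \<and>
     (\<forall>(c::complex) x. norm (Re c *\<^sub>R x + Im c *\<^sub>R blinfun_apply J x) = cmod c * norm x)"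

definition cscale :: "('x::real_normed_vector \<Rightarrow>\<^sub>L 'x) \<Rightarrow> complex \<Rightarrow> 'x \<Rightarrow> 'x" where
  "cscale J c x = Re c *\<^sub>R x + Im c *\<^sub>R blinfun_apply J x"

definition cscale_op :: "('y::real_normed_vector \<Rightarrow>\<^sub>L 'y) \<Rightarrow> complex \<Rightarrow> ('x::real_normed_vector \<Rightarrow>\<^sub>L 'y) \<Rightarrow> ('x \<Rightarrow>\<^sub>L 'y)" where
  "cscale_op J c A = Re c *\<^sub>R A + Im c *\<^sub>R (J o\<^sub>L A)"

text \<open>membership in B(X,Y): bounded and complex linear\<close>
definition clinear_op :: "('x::real_normed_vector \<Rightarrow>\<^sub>L 'x) \<Rightarrow> ('y::real_normed_vector \<Rightarrow>\<^sub>L 'y) \<Rightarrow> ('x \<Rightarrow>\<^sub>L 'y) \<Rightarrow> bool" where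
  "clinear_op JX JY A \<longleftrightarrow> A o\<^sub>L JX = JY o\<^sub>L A"

text \<open>inverse of a bounded operator (meaningful when it exists)\<close>
definition op_inv :: "('x::real_normed_vector \<Rightarrow>\<^sub>L 'y::real_normed_vector) \<Rightarrow> ('y \<Rightarrow>\<^sub>L 'x)" where
  "op_inv A = (THE B. B o\<^sub>L A = id_blinfun \<and> A o\<^sub>L B = id_blinfun)"

primrec op_pow :: "('x::real_normed_vector \<Rightarrow>\<^sub>L 'x) \<Rightarrow> nat \<Rightarrow> ('x \<Rightarrow>\<^sub>L 'x)" where
  "op_pow A 0 = id_blinfun"
| "op_pow A (Suc n) = A o\<^sub>L op_pow A n"

definition op_analytic_on :: "('x::real_normed_vector \<Rightarrow>\<^sub>L 'x) \<Rightarrow> (complex \<Rightarrow> ('y::real_normed_vector \<Rightarrow>\<^sub>L 'x)) \<Rightarrow> complex set \<Rightarrow> bool" where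
  "op_analytic_on JX R S \<longleftrightarrow> open S \<and>
     (\<forall>z\<in>S. \<exists>D. (R has_derivative (\<lambda>h. cscale_op JX h D)) (at z))"

definition V_set :: "real \<Rightarrow> complex set" where
  "V_set \<epsilon> = {z. cmod z < 1 + \<epsilon> \<and> z \<noteq> 1}"

definition W_set :: "real \<Rightarrow> complex set" where
  "W_set \<theta> = {z. 0 < cmod (z - 1) \<and> cmod (z - 1) < 1 + \<theta>}"

section \<open>Bochner measurability and mean zero (no separability assumed on X)\<close>

definition bochner_measurable :: "'a measure \<Rightarrow> ('a \<Rightarrow> 'x::real_normed_vector) \<Rightarrow> bool" where
  "bochner_measurable M f \<longleftrightarrow>
     (\<exists>s. (\<forall>i. simple_function M (s i)) \<and> (AE \<omega> in M. (\<lambda>i. s i \<omega>) \<longlonglongrightarrow> f \<omega>))"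

definition simple_integral_vec :: "'a measure \<Rightarrow> ('a \<Rightarrow> 'x::real_normed_vector) \<Rightarrow> 'x" where
  "simple_integral_vec M s = (\<Sum>y\<in>s ` space M. measure M (s -` {y} \<inter> space M) *\<^sub>R y)"

definition bochner_integral_is :: "'a measure \<Rightarrow> ('a \<Rightarrow> 'x::real_normed_vector) \<Rightarrow> 'x \<Rightarrow> bool" where
  "bochner_integral_is M f v \<longleftrightarrow>
     (\<exists>s. (\<forall>i. simple_function M (s i)) \<and> (AE \<omega> in M. (\<lambda>i. s i \<omega>) \<longlonglongrightarrow> f \<omega>) \<and>
          (\<lambda>i. \<integral>\<^sup>+ \<omega>. ennreal (norm (s i \<omega> - f \<omega>)) \<partial>M) \<longlonglongrightarrow> 0 \<and>
          (\<lambda>i. simple_integral_vec M (s i)) \<longlonglongrightarrow> v)"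

text \<open>\<nabla>^{-k} g_+(t) for k \<ge> 1, t \<ge> 0\<close>
definition nabla_neg :: "(int \<Rightarrow> 'y::real_vector) \<Rightarrow> nat \<Rightarrow> nat \<Rightarrow> 'y" where
  "nabla_neg g k t = (\<Sum>s=0..t. real ((s + k - 1) choose s) *\<^sub>R g (int t - int s))"

text \<open>\<nabla>^{l} g_+(t) for l \<ge> 0, t \<ge> 0\<close>
definition nabla_pos_plus :: "(int \<Rightarrow> 'y::real_vector) \<Rightarrow> nat \<Rightarrow> nat \<Rightarrow> 'y" where
  "nabla_pos_plus g l t = (\<Sum>s=0..min l t. (real (l choose s) * (-1) ^ s) *\<^sub>R g (int t - int s))"

end

theory Submission
  imports Defs
begin

(* The identity holds pathwise: only the recursion and the initial value are used, not the
   distributional hypotheses on n.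

   The integral of w^-k R(1 + w) over a circle |w| = r is 2 \<pi> T_k for every 0 < r < 1 + \<theta>, since
   the integrand is holomorphic in the punctured disc. Integrating R(z) A(z) = A(z) R(z) = I against
   w^-k gives T_k C0 + T_(k-1) C1 = C0 T_k + C1 T_(k-1) = [k = 0] I, and the Cauchy estimates show
   that T_-m decays like any r^m, r < 1, and T_n like (1 + \<theta>/2)^-n. Products T_-a C T_b that are
   invariant under the diagonal shift allowed by these identities therefore vanish, which yields
   T_-(m+1) = (-1)^m (T_-1 C0)^m T_-1 and T_n = (-1)^n (T_0 C1)^n T_0. Expanding the singular and
   regular parts of R in powers of z, their Maclaurin coefficients are U_s and V_s (Neumann series),
   and the coefficients K_s = U_s + V_s of R = A^-1 satisfy A0 K_0 = I and A0 K_(s+1) + A1 K_s = 0.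
   Hence x(t) = sum_(s <= t) K_s g(t - s) - K_t C1 c, and exchanging the finite sum over s with the
   series over the Laurent coefficients gives the stated formula. *)

section \<open>Algebra of bounded operators\<close>

lemma blinfun_compose_id_right [simp]: "f o\<^sub>L id_blinfun = f"
  by (rule blinfun_eqI) simp

lemma blinfun_compose_id_left [simp]: "id_blinfun o\<^sub>L f = f"
  by (rule blinfun_eqI) simp

lemma blinfun_compose_assoc: "(a o\<^sub>L b) o\<^sub>L c = a o\<^sub>L (b o\<^sub>L c)"
  by (rule blinfun_eqI) simp

lemmas blinfun_compose_add_left = bounded_bilinear.add_left[OF bounded_bilinear_blinfun_compose]
lemmas blinfun_compose_add_right = bounded_bilinear.add_right[OF bounded_bilinear_blinfun_compose]
lemmas blinfun_compose_diff_left = bounded_bilinear.diff_left[OF bounded_bilinear_blinfun_compose]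
lemmas blinfun_compose_diff_right = bounded_bilinear.diff_right[OF bounded_bilinear_blinfun_compose]
lemmas blinfun_compose_minus_left [simp] = bounded_bilinear.minus_left[OF bounded_bilinear_blinfun_compose]
lemmas blinfun_compose_minus_right [simp] = bounded_bilinear.minus_right[OF bounded_bilinear_blinfun_compose]
lemmas blinfun_compose_scaleR_left [simp] = bounded_bilinear.scaleR_left[OF bounded_bilinear_blinfun_compose]
lemmas blinfun_compose_scaleR_right [simp] = bounded_bilinear.scaleR_right[OF bounded_bilinear_blinfun_compose]
lemmas bounded_linear_blinfun_compose_left = bounded_bilinear.bounded_linear_right[OF bounded_bilinear_blinfun_compose]
lemmas bounded_linear_blinfun_compose_right = bounded_bilinear.bounded_linear_left[OF bounded_bilinear_blinfun_compose]


lemma norm_blinfun_compose3: "norm (a o\<^sub>L b o\<^sub>L c) \<le> norm a * norm b * norm c"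
  by (meson mult_right_mono norm_blinfun_compose norm_ge_zero order_trans)

lemma op_pow_add: "op_pow A (m + n) = op_pow A m o\<^sub>L op_pow A n"
  by (induction m) (simp_all add: blinfun_compose_assoc)

lemma op_pow_Suc': "op_pow A (Suc n) = op_pow A n o\<^sub>L A"
  using op_pow_add[of A n 1] by simp

lemma op_inv_unique:
  assumes "B o\<^sub>L A = id_blinfun" "A o\<^sub>L B = id_blinfun"
  shows "op_inv A = B"
  unfolding op_inv_def
proof (rule the_equality)
  fix B' assume B': "B' o\<^sub>L A = id_blinfun \<and> A o\<^sub>L B' = id_blinfun"
  have "B' = (B' o\<^sub>L A) o\<^sub>L B" using assms by (simp add: blinfun_compose_assoc)
  then show "B' = B" using B' by simp
qed (use assms in simp)

section \<open>Complex structures\<close>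

lemma cscale_add_left: "cscale J (a + b) v = cscale J a v + cscale J b v"
  by (simp add: cscale_def algebra_simps)

lemma cscale_add_right: "cscale J a (v + w) = cscale J a v + cscale J a w"
  by (simp add: cscale_def algebra_simps blinfun.add_right)

lemma cscale_zero_left [simp]: "cscale J 0 v = 0"
  by (simp add: cscale_def)

lemma cscale_zero_right [simp]: "cscale J a 0 = 0"
  by (simp add: cscale_def)


lemma cscale_one [simp]: "cscale J 1 v = v"
  by (simp add: cscale_def)

lemma cscale_of_real_mult: "cscale J (of_real r * c) v = r *\<^sub>R cscale J c v"
  by (simp add: cscale_def algebra_simps)

lemma cscale_cis: "cscale J (cis x) v = cos x *\<^sub>R v + sin x *\<^sub>R J v"
  by (simp add: cscale_def)

lemma bounded_linear_cscale [intro, simp]: "bounded_linear (cscale J a)"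
  unfolding cscale_def
  by (intro bounded_linear_add bounded_linear_scaleR_right
      bounded_linear_compose[OF bounded_linear_scaleR_right blinfun.bounded_linear_right])

lemma continuous_on_cscale [continuous_intros]:
  "continuous_on S c \<Longrightarrow> continuous_on S v \<Longrightarrow> continuous_on S (\<lambda>x. cscale J (c x) (v x))"
  unfolding cscale_def by (intro continuous_intros)

lemma cscale_commute_J: "cscale J a (J v) = J (cscale J a v)"
  by (simp add: cscale_def blinfun.add_right blinfun.scaleR_right)

lemma J_J_apply: "J o\<^sub>L J = - id_blinfun \<Longrightarrow> J (J v) = - v"
  by (metis blinfun_apply_blinfun_compose blinfun.minus_left id_blinfun.rep_eq)

lemma cscale_cscale:
  assumes "J o\<^sub>L J = - id_blinfun"
  shows "cscale J a (cscale J b v) = cscale J (a * b) v"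
  using J_J_apply[OF assms, of v]
  by (simp add: cscale_def blinfun.add_right blinfun.scaleR_right algebra_simps
      scaleR_add_left[symmetric] del: scaleR_add_left)

lemma complex_structure_J_J: "complex_structure J \<Longrightarrow> J o\<^sub>L J = - id_blinfun"
  by (simp add: complex_structure_def)

lemma norm_cscale: "complex_structure J \<Longrightarrow> norm (cscale J c v) = cmod c * norm v"
  by (simp add: complex_structure_def cscale_def)

lemma cscale_intertwining:
  assumes "J' o\<^sub>L A = A o\<^sub>L J"
  shows "A (cscale J c v) = cscale J' c (A v)"
proof -
  have "A (J v) = J' (A v)"
    using assms by (metis blinfun_apply_blinfun_compose)
  then show ?thesis by (simp add: cscale_def blinfun.add_right blinfun.scaleR_right)
qed

lemma clinear_op_cscale: "clinear_op JX JY A \<Longrightarrow> A (cscale JX c v) = cscale JY c (A v)"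
  by (rule cscale_intertwining) (simp add: clinear_op_def)

lemma clinear_op_add: "clinear_op JX JY A \<Longrightarrow> clinear_op JX JY B \<Longrightarrow> clinear_op JX JY (A + B)"
  by (simp add: clinear_op_def blinfun_compose_add_left blinfun_compose_add_right)

definition op_cstruct :: "('x::real_normed_vector \<Rightarrow>\<^sub>L 'x) \<Rightarrow> (('y::real_normed_vector \<Rightarrow>\<^sub>L 'x) \<Rightarrow>\<^sub>L ('y \<Rightarrow>\<^sub>L 'x))"
  where "op_cstruct J = Blinfun (\<lambda>A. J o\<^sub>L A)"

lemma op_cstruct_apply [simp]: "op_cstruct J A = J o\<^sub>L A"
  unfolding op_cstruct_def
  by (subst bounded_linear_Blinfun_apply)
     (auto intro: bounded_bilinear.bounded_linear_right[OF bounded_bilinear_blinfun_compose])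

lemma cscale_op_eq: "cscale_op J c A = cscale (op_cstruct J) c A"
  by (simp add: cscale_op_def cscale_def)

lemma cscale_op_cstruct_apply: "cscale (op_cstruct J) c A y = cscale J c (A y)"
  by (simp add: cscale_def blinfun.add_left blinfun.scaleR_left)

lemma complex_structure_op_cstruct:
  assumes J: "complex_structure J"
  shows "complex_structure (op_cstruct J :: ('y::real_normed_vector \<Rightarrow>\<^sub>L 'x::real_normed_vector) \<Rightarrow>\<^sub>L _)"
proof -
  let ?c = "cscale (op_cstruct J :: ('y \<Rightarrow>\<^sub>L 'x) \<Rightarrow>\<^sub>L _)"
  have JJ: "op_cstruct J o\<^sub>L op_cstruct J = - (id_blinfun :: ('y \<Rightarrow>\<^sub>L 'x) \<Rightarrow>\<^sub>L _)"
    by (intro blinfun_eqI) (simp add: J_J_apply[OF complex_structure_J_J[OF J]] blinfun.minus_left)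
  have le: "norm (?c c A) \<le> cmod c * norm A" for c A
  proof (rule norm_blinfun_bound)
    fix y
    show "norm (?c c A y) \<le> cmod c * norm A * norm y"
      by (simp add: cscale_op_cstruct_apply norm_cscale[OF J] mult.assoc mult_left_mono norm_blinfun)
  qed simp
  have "norm (?c c A) = cmod c * norm A" for c A
  proof (cases "c = 0")
    case False
    have "A = ?c (inverse c) (?c c A)"
      using False by (simp add: cscale_cscale[OF JJ])
    then have "norm A \<le> norm (?c c A) / cmod c"
      using le[of "inverse c" "?c c A"] by (simp add: norm_inverse divide_inverse mult.commute)
    with le[of c A] False show ?thesis by (simp add: field_simps)
  qed simp
  then show ?thesis
    using JJ by (simp add: complex_structure_def cscale_def)
qed

lemma clinear_op_compose_cscale:
  "clinear_op JX JY C \<Longrightarrow> C o\<^sub>L cscale (op_cstruct JX) c T = cscale (op_cstruct JY) c (C o\<^sub>L T)"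
  by (intro blinfun_eqI) (simp add: cscale_op_cstruct_apply clinear_op_cscale)

lemma cscale_compose: "cscale (op_cstruct J) c T o\<^sub>L C = cscale (op_cstruct J) c (T o\<^sub>L C)"
  by (intro blinfun_eqI) (simp add: cscale_op_cstruct_apply)

lemma has_derivative_cscale:
  fixes V :: "complex \<Rightarrow> 'v::real_normed_vector"
  assumes J: "J o\<^sub>L J = - id_blinfun"
    and dc: "(c has_field_derivative c') (at w)"
    and dV: "(V has_derivative (\<lambda>h. cscale J h V')) (at w)"
  shows "((\<lambda>w. cscale J (c w) (V w)) has_derivative
           (\<lambda>h. cscale J h (cscale J c' (V w) + cscale J (c w) V'))) (at w)"
proof -
  have "((\<lambda>w. Re (c w) *\<^sub>R V w + Im (c w) *\<^sub>R J (V w)) has_derivative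
     (\<lambda>h. Re (c w) *\<^sub>R cscale J h V' + Re (h * c') *\<^sub>R V w +
          (Im (c w) *\<^sub>R J (cscale J h V') + Im (h * c') *\<^sub>R J (V w)))) (at w)"
    using dc bounded_linear.has_derivative[OF blinfun.bounded_linear_right dV, of J]
    by (intro derivative_intros dV) (simp_all add: has_field_derivative_def mult_commute_abs)
  moreover have "Re (c w) *\<^sub>R cscale J h V' + Re (h * c') *\<^sub>R V w +
          (Im (c w) *\<^sub>R J (cscale J h V') + Im (h * c') *\<^sub>R J (V w))
      = cscale J h (cscale J c' (V w) + cscale J (c w) V')" for h
    unfolding cscale_add_right cscale_cscale[OF J] using J_J_apply[OF J, of V']
    by (simp add: cscale_def blinfun.add_right blinfun.scaleR_right algebra_simps)
  ultimately show ?thesis by (simp add: cscale_def)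
qed


section \<open>Integrals over circles\<close>

lemma has_integral_cscale_cis_multiple:
  fixes v :: "'v::banach"
  shows "((\<lambda>\<phi>. cscale J (cis (of_int m * \<phi>)) v) has_integral (if m = 0 then (2*pi) *\<^sub>R v else 0)) {0..2*pi}"
proof (cases "m = 0")
  case True
  then show ?thesis using has_integral_const_real[of v 0 "2*pi"] by simp
next
  case False
  define F where "F \<phi> = (sin (of_int m * \<phi>) / of_int m) *\<^sub>R v - (cos (of_int m * \<phi>) / of_int m) *\<^sub>R J v" for \<phi>
  have "((\<lambda>\<phi>. cscale J (cis (of_int m * \<phi>)) v) has_integral (F (2*pi) - F 0)) {0..2*pi}"
  proof (rule fundamental_theorem_of_calculus)
    fix x assume "x \<in> {0..2*pi}"
    show "(F has_vector_derivative cscale J (cis (of_int m * x)) v) (at x within {0..2*pi})"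
      unfolding F_def cscale_cis using False
      by (auto intro!: derivative_eq_intros simp: field_simps)
  qed simp
  moreover have "sin (of_int m * (2*pi)) = 0" "cos (of_int m * (2*pi)) = 1"
    using sin_int_2pin[of m] cos_int_2pin[of m] by (simp_all add: mult.commute)
  ultimately show ?thesis using False by (simp add: F_def)
qed

lemma has_integral_cscale_circle_power:
  fixes v :: "'v::banach"
  shows "((\<lambda>\<phi>. cscale J ((of_real r * cis \<phi>) powi k) v) has_integral
           (if k = 0 then (2*pi) *\<^sub>R v else 0)) {0..2*pi}"
proof -
  have "(of_real r * cis \<phi>) powi k = of_real (r powi k) * cis (of_int k * \<phi>)" for \<phi>
    by (simp add: power_int_mult_distrib cis_power_int)
  then have "cscale J ((of_real r * cis \<phi>) powi k) v = (r powi k) *\<^sub>R cscale J (cis (of_int k * \<phi>)) v" for \<phi>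
    by (simp only: cscale_of_real_mult)
  moreover have "((\<lambda>\<phi>. (r powi k) *\<^sub>R cscale J (cis (of_int k * \<phi>)) v) has_integral
      (r powi k) *\<^sub>R (if k = 0 then (2*pi) *\<^sub>R v else 0)) {0..2*pi}"
    by (rule has_integral_cmul[OF has_integral_cscale_cis_multiple])
  ultimately show ?thesis by auto
qed

text \<open>The integrand below is P' along the circle times dw / (i r d\<phi>), so its
  integral vanishes.\<close>

lemma circle_integral_derivative_eq_0:
  fixes P Q :: "complex \<Rightarrow> 'v::banach"
  assumes J: "J o\<^sub>L J = - id_blinfun" and r: "r > 0"
    and der: "\<And>\<phi>. (P has_derivative (\<lambda>h. cscale J h (Q (of_real r * cis \<phi>)))) (at (of_real r * cis \<phi>))"
  shows "((\<lambda>\<phi>. cscale J (cis \<phi>) (Q (of_real r * cis \<phi>))) has_integral 0) {0..2*pi}"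
proof -
  define f where "f \<phi> = cscale J (cis \<phi>) (Q (of_real r * cis \<phi>))" for \<phi>
  have "((\<lambda>\<phi>. P (of_real r * cis \<phi>)) has_vector_derivative cscale J (\<i> * of_real r) (f \<phi>))
      (at \<phi> within {0..2*pi})" for \<phi>
  proof -
    have "((\<lambda>\<phi>. of_real r * cis \<phi>) has_derivative (\<lambda>h. of_real r * (h *\<^sub>R (\<i> * cis \<phi>))))
        (at \<phi> within {0..2*pi})"
      by (auto intro!: derivative_eq_intros)
    note chain = has_derivative_compose[OF this der]
    have "of_real r * (h *\<^sub>R (\<i> * cis \<phi>)) = of_real h * (\<i> * of_real r * cis \<phi>)" for h
      by (simp add: scaleR_conv_of_real algebra_simps)
    with chain show ?thesis
      unfolding has_vector_derivative_def f_def cscale_cscale[OF J] by (simp only: cscale_of_real_mult)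
  qed
  then have "((\<lambda>\<phi>. cscale J (\<i> * of_real r) (f \<phi>)) has_integral
      P (of_real r * cis (2*pi)) - P (of_real r * cis 0)) {0..2*pi}"
    by (intro fundamental_theorem_of_calculus) auto
  then have "((\<lambda>\<phi>. cscale J (\<i> * of_real r) (f \<phi>)) has_integral 0) {0..2*pi}"
    by simp
  from has_integral_linear[OF this bounded_linear_cscale[of J "- \<i> / of_real r"]]
  show ?thesis
    using r by (simp add: o_def cscale_cscale[OF J] field_simps f_def)
qed

text \<open>Cauchy's theorem for an annulus: by Leibniz's rule, the radial derivative of the circle
  integral is the integral of the previous lemma.\<close>

lemma circle_integral_independent_of_radius:
  fixes P Q :: "complex \<Rightarrow> 'v::banach"
  assumes J: "J o\<^sub>L J = - id_blinfun"
    and der: "\<And>w. a < cmod w \<Longrightarrow> cmod w < b \<Longrightarrow> (P has_derivative (\<lambda>h. cscale J h (Q w))) (at w)"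
    and cont: "continuous_on {w. a < cmod w \<and> cmod w < b} Q"
    and a: "0 \<le> a"
  obtains C where "\<And>r. r \<in> {a<..<b} \<Longrightarrow> integral {0..2*pi} (\<lambda>\<phi>. P (of_real r * cis \<phi>)) = C"
proof -
  define U where "U = {a<..<b}"
  define f where "f r \<phi> = P (of_real r * cis \<phi>)" for r \<phi>
  define fr where "fr r \<phi> = cscale J (cis \<phi>) (Q (of_real r * cis \<phi>))" for r \<phi>
  have ann: "a < cmod (of_real r * cis \<phi>)" "cmod (of_real r * cis \<phi>) < b" if "r \<in> U" for r \<phi>
    using that a unfolding U_def by (auto simp: norm_mult)
  have contP: "continuous_on {w. a < cmod w \<and> cmod w < b} P"
    using der by (metis (mono_tags, lifting) continuous_at_imp_continuous_on has_derivative_continuous mem_Collect_eq)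
  have radial: "((\<lambda>r. f r \<phi>) has_vector_derivative fr r \<phi>) (at r within U)" if "r \<in> U" for r \<phi>
  proof -
    have "((\<lambda>r. of_real r * cis \<phi>) has_derivative (\<lambda>h. of_real h * cis \<phi>)) (at r within U)"
      by (auto intro!: derivative_eq_intros)
    from has_derivative_compose[OF this der[OF ann[OF that]]] show ?thesis
      unfolding has_vector_derivative_def f_def fr_def by (simp add: cscale_of_real_mult)
  qed
  have integrable: "f r integrable_on cbox 0 (2*pi)" if "r \<in> U" for r
    unfolding f_def cbox_interval
    by (rule integrable_continuous_interval, rule continuous_on_compose2[OF contP])
       (auto intro!: continuous_intros ann[OF that])
  have continuous: "continuous_on (U \<times> cbox 0 (2*pi)) (\<lambda>(r, \<phi>). fr r \<phi>)"
    unfolding fr_def split_beta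
    by (intro continuous_intros continuous_on_compose2[OF cont]) (auto intro!: ann)
  have radial_integral: "integral (cbox 0 (2*pi)) (fr r) = 0" if "r \<in> U" for r
    using circle_integral_derivative_eq_0[OF J _ der] ann[OF that] that a
    by (simp add: U_def fr_def[abs_def] cbox_interval integral_unique)
  have "((\<lambda>r. integral (cbox 0 (2*pi)) (f r)) has_derivative (\<lambda>h. 0)) (at r within U)"
    if "r \<in> U" for r
    using leibniz_rule_vector_derivative[OF radial integrable continuous that] radial_integral[OF that]
    by (simp add: U_def has_vector_derivative_def)
  from has_derivative_zero_constant[OF _ this] obtain C where "\<forall>r\<in>U. integral (cbox 0 (2*pi)) (f r) = C"
    by (auto simp: U_def)
  then show ?thesis using that unfolding U_def f_def cbox_interval by blast
qed

lemma has_sum_imp_bounded_terms: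
  fixes f :: "'a \<Rightarrow> 'v::real_normed_vector"
  assumes "(f has_sum s) A"
  obtains B where "\<And>x. x \<in> A \<Longrightarrow> norm (f x) \<le> B"
proof -
  have "eventually (\<lambda>X. dist (sum f X) s < 1) (finite_subsets_at_top A)"
    using assms unfolding has_sum_def by (rule tendstoD) simp
  then obtain X0 where X0: "finite X0" "X0 \<subseteq> A"
    "\<And>Y. finite Y \<Longrightarrow> X0 \<subseteq> Y \<Longrightarrow> Y \<subseteq> A \<Longrightarrow> dist (sum f Y) s < 1"
    unfolding eventually_finite_subsets_at_top by metis
  have "norm (f x) \<le> 2 + (\<Sum>y\<in>X0. norm (f y))" if "x \<in> A" for x
  proof (cases "x \<in> X0")
    case True
    then have "norm (f x) \<le> (\<Sum>y\<in>X0. norm (f y))"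
      using X0(1) by (intro member_le_sum) auto
    then show ?thesis by linarith
  next
    case False
    have "f x = (sum f (insert x X0) - s) - (sum f X0 - s)" using False X0(1) by simp
    then have "norm (f x) \<le> dist (sum f (insert x X0)) s + dist (sum f X0) s"
      by (metis dist_norm norm_triangle_ineq4)
    moreover have "dist (sum f (insert x X0)) s < 1" "dist (sum f X0) s < 1"
      using X0 that by (auto intro: X0(3))
    moreover have "0 \<le> (\<Sum>y\<in>X0. norm (f y))" by (simp add: sum_nonneg)
    ultimately show ?thesis by linarith
  qed
  then show ?thesis using that by blast
qed

lemma has_integral_has_sum_uniform:
  fixes f :: "'i \<Rightarrow> real \<Rightarrow> 'v::banach"
  assumes uniform: "uniform_limit {a..b} (\<lambda>X x. \<Sum>i\<in>X. f i x) g (finite_subsets_at_top I)"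
    and cont: "\<And>i. continuous_on {a..b} (f i)"
    and integral: "\<And>i. i \<in> I \<Longrightarrow> (f i has_integral y i) {a..b}"
    and sum: "(y has_sum Y) I"
  shows "(g has_integral Y) {a..b}"
proof -
  obtain J L where J: "\<And>X. ((\<lambda>x. \<Sum>i\<in>X. f i x) has_integral J X) {a..b}"
    and L: "(g has_integral L) {a..b}" and lim: "(J \<longlongrightarrow> L) (finite_subsets_at_top I)"
    using uniform_limit_integral[OF uniform] cont by (metis continuous_on_sum finite_subsets_at_top_neq_bot)
  have "eventually (\<lambda>X. J X = sum y X) (finite_subsets_at_top I)"
    unfolding eventually_finite_subsets_at_top
  proof (intro exI[of _ "{}"] conjI allI impI)
    fix X assume "finite X \<and> {} \<subseteq> X \<and> X \<subseteq> I"
    then have "((\<lambda>x. \<Sum>i\<in>X. f i x) has_integral sum y X) {a..b}"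
      using integral by (intro has_integral_sum) auto
    then show "J X = sum y X" using J by (rule has_integral_unique[rotated])
  qed auto
  with lim have "(sum y \<longlongrightarrow> L) (finite_subsets_at_top I)"
    by (rule Lim_transform_eventually)
  with sum have "L = Y"
    unfolding has_sum_def using tendsto_unique finite_subsets_at_top_neq_bot by blast
  with L show ?thesis by simp
qed

lemma laurent_coefficient_integral:
  fixes T :: "int \<Rightarrow> 'v::banach" and F :: "complex \<Rightarrow> 'v"
  assumes J: "complex_structure J" and r: "r > 0"
    and laurent: "\<And>\<phi>. ((\<lambda>j. cscale J ((of_real r * cis \<phi>) powi j) (T j)) has_sum F (of_real r * cis \<phi>)) UNIV"
    and abs_summable: "(\<lambda>j. norm (T j) * r powi j) summable_on UNIV"
  shows "((\<lambda>\<phi>. cscale J ((of_real r * cis \<phi>) powi (-k)) (F (of_real r * cis \<phi>))) has_integral (2*pi) *\<^sub>R T k) {0..2*pi}"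
proof (rule has_integral_has_sum_uniform)
  define w where "w \<phi> = of_real r * cis \<phi>" for \<phi>
  have w0: "w \<phi> \<noteq> 0" for \<phi> using r by (simp add: w_def)
  define f where "f j \<phi> = cscale J (w \<phi> powi (j - k)) (T j)" for j \<phi>
  have f_eq: "cscale J (w \<phi> powi (-k)) (cscale J (w \<phi> powi j) (T j)) = f j \<phi>" for j \<phi>
    using w0 by (simp add: f_def cscale_cscale[OF complex_structure_J_J[OF J]] power_int_add[symmetric])
  have norm_f: "norm (f j \<phi>) \<le> r powi (-k) * (norm (T j) * r powi j)" for j \<phi>
  proof -
    have "r powi (j - k) = r powi (-k) * r powi j"
      using r power_int_add[of r "-k" j] by simp
    then show ?thesis using r by (simp add: f_def w_def norm_cscale[OF J] norm_power_int norm_mult)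
  qed
  show "uniform_limit {0..2*pi} (\<lambda>X \<phi>. \<Sum>j\<in>X. f j \<phi>)
      (\<lambda>\<phi>. cscale J ((of_real r * cis \<phi>) powi (-k)) (F (of_real r * cis \<phi>))) (finite_subsets_at_top UNIV)"
  proof (rule Weierstrass_m_test_general'[OF norm_f])
    show "((\<lambda>j. f j \<phi>) has_sum cscale J ((of_real r * cis \<phi>) powi (-k)) (F (of_real r * cis \<phi>))) UNIV" for \<phi>
      unfolding f_eq[symmetric] w_def by (rule has_sum_bounded_linear[OF bounded_linear_cscale laurent])
  qed (rule summable_on_cmult_right[OF abs_summable])
  show "continuous_on {0..2*pi} (f j)" for j
    unfolding f_def w_def using r by (intro continuous_intros) auto
  show "(f j has_integral (if j = k then (2*pi) *\<^sub>R T k else 0)) {0..2*pi}" for j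
    unfolding f_def w_def by (rule has_integral_eq_rhs[OF has_integral_cscale_circle_power]) simp
  show "((\<lambda>j. if j = k then (2*pi) *\<^sub>R T k else 0) has_sum (2*pi) *\<^sub>R T k) UNIV"
    by (rule has_sum_finite_neutralI[of "{k}"]) auto
qed

section \<open>Power series of bounded operators\<close>

lemma summable_binomial_geometric:
  fixes q :: real
  assumes q: "0 \<le> q" "q < 1"
  shows "summable (\<lambda>m. real ((m + s) choose s) * q ^ m)"
proof (induction s)
  case 0
  then show ?case using q by (simp add: summable_geometric)
next
  case (Suc s)
  have "summable (\<lambda>k. \<Sum>i\<le>k. (real ((i + s) choose s) * q ^ i) * q ^ (k - i))"
    using Suc q by (intro summable_Cauchy_product) (auto simp: summable_geometric)
  moreover have "(\<Sum>i\<le>k. (real ((i + s) choose s) * q ^ i) * q ^ (k - i)) = real ((k + Suc s) choose Suc s) * q ^ k" for k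
  proof -
    have "(\<Sum>i\<le>k. (real ((i + s) choose s) * q ^ i) * q ^ (k - i)) = (\<Sum>i\<le>k. real ((s + i) choose s)) * q ^ k"
      unfolding sum_distrib_right
      by (intro sum.cong refl) (simp add: mult.assoc power_add[symmetric] add.commute)
    also have "(\<Sum>i\<le>k. real ((s + i) choose s)) = real ((s + k + 1) choose (s + 1))"
      by (subst of_nat_sum[symmetric], subst choose_rising_sum(1)) simp
    finally show ?thesis by (simp add: add.commute add.left_commute)
  qed
  ultimately show ?case by simp
qed

definition binomially_bounded :: "(nat \<Rightarrow> real) \<Rightarrow> bool" where
  "binomially_bounded \<beta> \<longleftrightarrow> (\<exists>k. \<forall>m. \<bar>\<beta> m\<bar> \<le> real ((m + k) choose k))"

lemma binomially_boundedI: "(\<And>m. \<bar>\<beta> m\<bar> \<le> real ((m + k) choose k)) \<Longrightarrow> binomially_bounded \<beta>"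
  unfolding binomially_bounded_def by blast

lemma summable_binomially_bounded_scaleR:
  fixes a :: "nat \<Rightarrow> 'v::banach"
  assumes "binomially_bounded \<beta>" and a: "\<And>m. norm (a m) \<le> M * q ^ m" and q: "0 \<le> q" "q < 1"
  shows "summable (\<lambda>m. \<beta> m *\<^sub>R a m)"
proof -
  obtain k where \<beta>: "\<And>m. \<bar>\<beta> m\<bar> \<le> real ((m + k) choose k)"
    using assms(1) by (auto simp: binomially_bounded_def)
  show ?thesis
  proof (rule summable_comparison_test)
    show "summable (\<lambda>m. M * (real ((m + k) choose k) * q ^ m))"
      by (rule summable_mult[OF summable_binomial_geometric[OF q]])
    have "\<bar>\<beta> m\<bar> * norm (a m) \<le> real ((m + k) choose k) * (M * q ^ m)" for m
      using \<beta>[of m] a[of m] by (intro mult_mono) (auto intro: order_trans[OF norm_ge_zero])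
    then show "\<exists>N. \<forall>m\<ge>N. norm (\<beta> m *\<^sub>R a m) \<le> M * (real ((m + k) choose k) * q ^ m)"
      by (simp add: algebra_simps)
  qed
qed

lemma summable_on_power_abs_int:
  fixes q :: real
  assumes "0 \<le> q" "q < 1"
  shows "(\<lambda>j::int. q ^ nat \<bar>j\<bar>) summable_on UNIV"
proof -
  have U: "(UNIV::int set) = range int \<union> range (\<lambda>n. - int n - 1)"
  proof -
    have "j \<in> range int \<union> range (\<lambda>n. - int n - 1)" for j :: int
      by (cases "j \<ge> 0") (auto intro: image_eqI[of _ _ "nat j"] image_eqI[of _ _ "nat (- j - 1)"])
    then show ?thesis by auto
  qed
  have nonneg: "(\<lambda>j::int. q ^ nat \<bar>j\<bar>) summable_on range int"
    by (subst summable_on_reindex)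
       (use assms in \<open>auto simp: o_def summable_on_UNIV_nonneg_real_iff intro: summable_geometric\<close>)
  have "(\<lambda>n. q ^ nat \<bar>- int n - 1\<bar>) = (\<lambda>n. q * q ^ n)"
    by (auto simp: nat_add_distrib)
  then have neg: "(\<lambda>j::int. q ^ nat \<bar>j\<bar>) summable_on range (\<lambda>n. - int n - 1)"
    using assms by (subst summable_on_reindex)
      (auto simp: inj_on_def o_def summable_on_UNIV_nonneg_real_iff intro: summable_mult summable_geometric)
  show ?thesis unfolding U by (rule summable_on_Un_disjoint[OF nonneg neg]) auto
qed

lemma one_minus_compose_power_series:
  fixes A :: "'a::banach \<Rightarrow>\<^sub>L 'a"
  assumes sc: "summable (\<lambda>m. c m *\<^sub>R op_pow A m)" and sd: "summable (\<lambda>m. d m *\<^sub>R op_pow A m)"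
    and c0: "c 0 = d 0" and cd: "\<And>m. c (Suc m) - c m = d (Suc m)"
  shows "(id_blinfun - A) o\<^sub>L (\<Sum>m. c m *\<^sub>R op_pow A m) = (\<Sum>m. d m *\<^sub>R op_pow A m)"
    and "(\<Sum>m. c m *\<^sub>R op_pow A m) o\<^sub>L (id_blinfun - A) = (\<Sum>m. d m *\<^sub>R op_pow A m)"
proof -
  have sc': "summable (\<lambda>m. c m *\<^sub>R op_pow A (Suc m))"
    using bounded_linear.summable[OF bounded_linear_blinfun_compose_left sc] by simp
  have sc1: "summable (\<lambda>m. c (Suc m) *\<^sub>R op_pow A (Suc m))"
    using sc by (subst summable_Suc_iff)
  have hc: "(\<Sum>m. c m *\<^sub>R op_pow A m) = c 0 *\<^sub>R id_blinfun + (\<Sum>m. c (Suc m) *\<^sub>R op_pow A (Suc m))"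
    using suminf_split_head[OF sc] by simp
  have hd: "(\<Sum>m. d m *\<^sub>R op_pow A m) = d 0 *\<^sub>R id_blinfun + (\<Sum>m. d (Suc m) *\<^sub>R op_pow A (Suc m))"
    using suminf_split_head[OF sd] by simp
  have diff: "(\<Sum>m. c (Suc m) *\<^sub>R op_pow A (Suc m)) - (\<Sum>m. c m *\<^sub>R op_pow A (Suc m))
      = (\<Sum>m. d (Suc m) *\<^sub>R op_pow A (Suc m))"
    unfolding suminf_diff[OF sc1 sc'] by (simp add: cd[symmetric] scaleR_diff_left)
  have key: "(\<Sum>m. c m *\<^sub>R op_pow A m) - (\<Sum>m. c m *\<^sub>R op_pow A (Suc m)) = (\<Sum>m. d m *\<^sub>R op_pow A m)"
    using hc hd diff c0 by (simp add: algebra_simps)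
  have "A o\<^sub>L (\<Sum>m. c m *\<^sub>R op_pow A m) = (\<Sum>m. c m *\<^sub>R op_pow A (Suc m))"
    using bounded_linear.suminf[OF bounded_linear_blinfun_compose_left sc] by simp
  then show "(id_blinfun - A) o\<^sub>L (\<Sum>m. c m *\<^sub>R op_pow A m) = (\<Sum>m. d m *\<^sub>R op_pow A m)"
    using key by (simp add: blinfun_compose_diff_left)
  have "(\<Sum>m. c m *\<^sub>R op_pow A m) o\<^sub>L A = (\<Sum>m. c m *\<^sub>R (op_pow A m o\<^sub>L A))"
    using bounded_linear.suminf[OF bounded_linear_blinfun_compose_right sc, of A] by simp
  also have "\<dots> = (\<Sum>m. c m *\<^sub>R op_pow A (Suc m))"
    by (simp only: op_pow_Suc')
  finally show "(\<Sum>m. c m *\<^sub>R op_pow A m) o\<^sub>L (id_blinfun - A) = (\<Sum>m. d m *\<^sub>R op_pow A m)"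
    using key by (simp add: blinfun_compose_diff_right)
qed

lemma neumann_series_power:
  fixes A :: "'a::banach \<Rightarrow>\<^sub>L 'a"
  assumes K: "\<And>m. norm (op_pow A m) \<le> K * q ^ m" and q: "0 \<le> q" "q < 1"
  shows "summable (\<lambda>m. real ((m + s) choose s) *\<^sub>R op_pow A m)"
    and "op_pow (op_inv (id_blinfun - A)) (Suc s) = (\<Sum>m. real ((m + s) choose s) *\<^sub>R op_pow A m)"
proof -
  have summable: "summable (\<lambda>m. real ((m + s) choose s) *\<^sub>R op_pow A m)" for s
    by (rule summable_binomially_bounded_scaleR[OF binomially_boundedI[of _ s] K q]) simp
  then show "summable (\<lambda>m. real ((m + s) choose s) *\<^sub>R op_pow A m)" .
  define S where "S s = (\<Sum>m. real ((m + s) choose s) *\<^sub>R op_pow A m)" for s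
  have step: "(id_blinfun - A) o\<^sub>L S (Suc s) = S s" for s
    unfolding S_def
    by (rule one_minus_compose_power_series(1)[OF summable summable])
       (simp_all add: of_nat_add[symmetric] del: of_nat_add)
  have delta: "summable (\<lambda>m. (if m = 0 then 1 else 0) *\<^sub>R op_pow A m)"
    by (rule summable_finite[of "{0}"]) auto
  have delta_sum: "(\<Sum>m. (if m = 0 then 1 else 0) *\<^sub>R op_pow A m) = id_blinfun"
    by (subst suminf_finite[of "{0}"]) auto
  have geometric: "summable (\<lambda>m. (1::real) *\<^sub>R op_pow A m)" using summable[of 0] by simp
  have left_inv: "S 0 o\<^sub>L (id_blinfun - A) = id_blinfun"
    using one_minus_compose_power_series(2)[OF geometric delta] delta_sum by (simp add: S_def)
  have inv: "op_inv (id_blinfun - A) = S 0"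
    using one_minus_compose_power_series(1)[OF geometric delta] delta_sum left_inv
    by (intro op_inv_unique) (simp_all add: S_def)
  have "op_pow (op_inv (id_blinfun - A)) (Suc s) = S s" for s
  proof (induction s)
    case (Suc s)
    have "op_pow (op_inv (id_blinfun - A)) (Suc (Suc s)) = S 0 o\<^sub>L ((id_blinfun - A) o\<^sub>L S (Suc s))"
      using Suc by (simp add: inv step)
    also have "\<dots> = S (Suc s)"
      by (simp add: blinfun_compose_assoc[symmetric] left_inv)
    finally show ?case .
  qed (simp add: inv)
  then show "op_pow (op_inv (id_blinfun - A)) (Suc s) = (\<Sum>m. real ((m + s) choose s) *\<^sub>R op_pow A m)"
    by (simp add: S_def)
qed

lemma const_seq_eq_0_if_geometric_bound:
  fixes f :: "nat \<Rightarrow> 'a::real_normed_vector"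
  assumes const: "\<And>n. f (Suc n) = f n" and bound: "\<And>n. norm (f n) \<le> K * q ^ n"
    and q: "0 \<le> q" "q < 1"
  shows "f 0 = 0"
proof -
  have "f n = f 0" for n by (induction n) (simp_all add: const)
  then have "f \<longlonglongrightarrow> f 0"
    by (intro Lim_transform_eventually[OF tendsto_const] always_eventually allI) metis
  moreover have "(\<lambda>n. K * q ^ n) \<longlonglongrightarrow> 0"
    using q by (intro tendsto_mult_right_zero LIMSEQ_power_zero) auto
  then have "f \<longlonglongrightarrow> 0"
    by (rule Lim_null_comparison[rotated]) (use bound in auto)
  ultimately show ?thesis by (rule LIMSEQ_unique)
qed

section \<open>Laurent coefficients of the resolvent\<close>

locale resolvent_laurent =
  fixes JX :: "'x::banach \<Rightarrow>\<^sub>L 'x" and JY :: "'y::banach \<Rightarrow>\<^sub>L 'y"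
    and A0 A1 :: "'x \<Rightarrow>\<^sub>L 'y" and R :: "complex \<Rightarrow> ('y \<Rightarrow>\<^sub>L 'x)" and T :: "int \<Rightarrow> ('y \<Rightarrow>\<^sub>L 'x)"
    and \<epsilon> \<theta> :: real
  assumes JX: "complex_structure JX" and JY: "complex_structure JY"
    and A0: "clinear_op JX JY A0" and A1: "clinear_op JX JY A1"
    and eps: "\<epsilon> > 0" and theta: "\<theta> > 0"
    and inverse: "\<forall>z \<in> V_set \<epsilon> \<union> W_set \<theta>.
      R z o\<^sub>L (A0 + cscale_op JY z A1) = id_blinfun \<and> (A0 + cscale_op JY z A1) o\<^sub>L R z = id_blinfun"
    and analytic: "op_analytic_on JX R (V_set \<epsilon> \<union> W_set \<theta>)"
    and laurent: "\<forall>z. 0 < cmod (z - 1) \<and> cmod (z - 1) < \<epsilon> \<longrightarrow>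
      ((\<lambda>j. cscale_op JX ((z - 1) powi j) (T j)) has_sum R z) UNIV"
begin

abbreviation "\<Omega> \<equiv> V_set \<epsilon> \<union> W_set \<theta>"
abbreviation "C0 \<equiv> A0 + A1"

definition pencil :: "complex \<Rightarrow> 'x \<Rightarrow>\<^sub>L 'y" where "pencil z = A0 + cscale_op JY z A1"

lemmas complex_structure_op_JX = complex_structure_op_cstruct[OF JX]
lemmas complex_structure_op_JY = complex_structure_op_cstruct[OF JY]

lemmas JJ_op_JX = complex_structure_J_J[OF complex_structure_op_JX]
lemmas JJ_op_JY = complex_structure_J_J[OF complex_structure_op_JY]

lemma open_\<Omega>: "open \<Omega>"
  using analytic by (simp add: op_analytic_on_def)

lemma annulus_in_\<Omega>: "0 < cmod w \<Longrightarrow> cmod w < 1 + \<theta> \<Longrightarrow> 1 + w \<in> \<Omega>"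
  by (auto simp: W_set_def)

lemma pencil_one_plus: "pencil (1 + w) = C0 + cscale_op JY w A1"
  by (simp add: pencil_def cscale_op_eq cscale_add_left)

lemma R_pencil: "z \<in> \<Omega> \<Longrightarrow> R z o\<^sub>L pencil z = id_blinfun"
  and pencil_R: "z \<in> \<Omega> \<Longrightarrow> pencil z o\<^sub>L R z = id_blinfun"
  using inverse by (simp_all add: pencil_def)

lemma R_pencil_apply: "z \<in> \<Omega> \<Longrightarrow> R z (pencil z x) = x"
  and pencil_R_apply: "z \<in> \<Omega> \<Longrightarrow> pencil z (R z y) = y"
  using R_pencil pencil_R by (metis blinfun_apply_blinfun_compose id_blinfun.rep_eq)+

lemma pencil_apply: "pencil z x = A0 x + cscale JY z (A1 x)"
  by (simp add: pencil_def cscale_op_eq cscale_op_cstruct_apply blinfun.add_left)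

lemma R_cscale:
  assumes z: "z \<in> \<Omega>"
  shows "R z (cscale JY c y) = cscale JX c (R z y)"
proof (rule cscale_intertwining)
  have "A0 (JX x) = JY (A0 x)" "A1 (JX x) = JY (A1 x)" for x
    using A0 A1 unfolding clinear_op_def by (metis blinfun_apply_blinfun_compose)+
  then have "pencil z (JX x) = JY (pencil z x)" for x
    by (simp add: pencil_apply cscale_commute_J blinfun.add_right)
  then have "R z (JY y) = JX (R z y)" for y
    by (metis pencil_R_apply[OF z] R_pencil_apply[OF z])
  then show "JX o\<^sub>L R z = R z o\<^sub>L JY" by (intro blinfun_eqI) simp
qed

text \<open>Differentiating R(z) A(z) = I gives R' = - R A1 R.\<close>

lemma has_derivative_R:
  assumes z: "z \<in> \<Omega>"
  shows "(R has_derivative (\<lambda>h. cscale (op_cstruct JX) h (- (R z o\<^sub>L A1 o\<^sub>L R z)))) (at z)"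
proof -
  obtain D where D: "(R has_derivative (\<lambda>h. cscale_op JX h D)) (at z)"
    using analytic z by (auto simp: op_analytic_on_def)
  have "(pencil has_derivative (\<lambda>h. cscale_op JY h A1)) (at z)"
    unfolding pencil_def[abs_def] cscale_op_def by (auto intro!: derivative_eq_intros)
  from bounded_bilinear.FDERIV[OF bounded_bilinear_blinfun_compose D this]
  have "((\<lambda>z. R z o\<^sub>L pencil z) has_derivative
      (\<lambda>h. (R z o\<^sub>L cscale_op JY h A1) + (cscale_op JX h D o\<^sub>L pencil z))) (at z)" .
  moreover have "((\<lambda>z. R z o\<^sub>L pencil z) has_derivative (\<lambda>h. 0)) (at z)"
    by (rule has_derivative_transform_within_open[OF has_derivative_const open_\<Omega> z]) (simp add: R_pencil)
  ultimately have "(\<lambda>h. (R z o\<^sub>L cscale_op JY h A1) + (cscale_op JX h D o\<^sub>L pencil z)) = (\<lambda>h. 0)"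
    by (rule has_derivative_unique)
  from fun_cong[OF this, of 1] have "D o\<^sub>L pencil z = - (R z o\<^sub>L A1)"
    by (simp add: cscale_op_eq eq_neg_iff_add_eq_0 add.commute)
  then have "D o\<^sub>L (pencil z o\<^sub>L R z) = - (R z o\<^sub>L A1 o\<^sub>L R z)"
    by (simp add: blinfun_compose_assoc[symmetric])
  with D pencil_R[OF z] show ?thesis by (simp add: cscale_op_eq)
qed

lemma continuous_on_R: "continuous_on \<Omega> R"
  using has_derivative_R by (meson continuous_at_imp_continuous_on has_derivative_continuous)

text \<open>w^-k R(1 + w), whose integrals over circles |w| = r < 1 + \<theta> are 2 \<pi> T k.\<close>

definition laurent_integrand :: "int \<Rightarrow> complex \<Rightarrow> 'y \<Rightarrow>\<^sub>L 'x" where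
  "laurent_integrand k w = cscale (op_cstruct JX) (w powi (-k)) (R (1 + w))"

definition laurent_integrand_deriv :: "int \<Rightarrow> complex \<Rightarrow> 'y \<Rightarrow>\<^sub>L 'x" where
  "laurent_integrand_deriv k w = cscale (op_cstruct JX) (of_int (-k) * w powi (-k - 1)) (R (1 + w)) +
    cscale (op_cstruct JX) (w powi (-k)) (- (R (1 + w) o\<^sub>L A1 o\<^sub>L R (1 + w)))"

lemma has_derivative_laurent_integrand:
  assumes "0 < cmod w" "cmod w < 1 + \<theta>"
  shows "(laurent_integrand k has_derivative (\<lambda>h. cscale (op_cstruct JX) h (laurent_integrand_deriv k w))) (at w)"
proof -
  have "((\<lambda>w. R (1 + w)) has_derivative
      (\<lambda>h. cscale (op_cstruct JX) h (- (R (1 + w) o\<^sub>L A1 o\<^sub>L R (1 + w))))) (at w)"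
    using has_derivative_compose[OF has_derivative_add[OF has_derivative_const has_derivative_ident]
        has_derivative_R[OF annulus_in_\<Omega>[OF assms]]] by simp
  moreover have "((\<lambda>w. w powi (-k)) has_field_derivative (of_int (-k) * w powi (-k - 1))) (at w)"
    using DERIV_power_int[OF DERIV_ident, of "-k" w UNIV] assms by simp
  ultimately show ?thesis
    unfolding laurent_integrand_def[abs_def] laurent_integrand_deriv_def
    by (intro has_derivative_cscale[OF JJ_op_JX])
qed

lemma continuous_on_laurent_integrand_deriv:
  "continuous_on {w. 0 < cmod w \<and> cmod w < 1 + \<theta>} (laurent_integrand_deriv k)"
proof -
  have "continuous_on {w. 0 < cmod w \<and> cmod w < 1 + \<theta>} (\<lambda>w. R (1 + w))"
    by (rule continuous_on_compose2[OF continuous_on_R]) (auto intro!: continuous_intros simp: W_set_def)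
  then show ?thesis
    unfolding laurent_integrand_deriv_def[abs_def] by (intro continuous_intros) auto
qed

lemma continuous_on_laurent_integrand:
  "continuous_on {w. 0 < cmod w \<and> cmod w < 1 + \<theta>} (laurent_integrand k)"
  by (rule continuous_at_imp_continuous_on)
     (auto intro: has_derivative_continuous[OF has_derivative_laurent_integrand])

lemma bounded_laurent_terms:
  assumes "0 < \<rho>" "\<rho> < \<epsilon>"
  obtains B where "\<And>j. norm (T j) * \<rho> powi j \<le> B"
proof -
  have "((\<lambda>j. cscale_op JX ((1 + of_real \<rho> - 1) powi j) (T j)) has_sum R (1 + of_real \<rho>)) UNIV"
    using laurent[rule_format, of "1 + of_real \<rho>"] assms by simp
  then obtain B where "\<And>j. norm (cscale_op JX ((1 + of_real \<rho> - 1) powi j) (T j)) \<le> B"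
    by (rule has_sum_imp_bounded_terms) blast
  moreover have "norm (cscale_op JX ((1 + of_real \<rho> - 1) powi j) (T j)) = norm (T j) * \<rho> powi j" for j
    using assms by (simp add: cscale_op_eq norm_cscale[OF complex_structure_op_JX] norm_power_int)
  ultimately show ?thesis using that by metis
qed

text \<open>Bounds on two circles of radii r/2 and 3r/2 dominate the terms on radius r by a
  two-sided geometric series.\<close>

lemma abs_summable_laurent:
  assumes r: "0 < r" "2 * r < \<epsilon>"
  shows "(\<lambda>j. norm (T j) * r powi j) summable_on UNIV"
proof -
  obtain B1 where B1: "\<And>j. norm (T j) * (r/2) powi j \<le> B1"
    using bounded_laurent_terms[of "r/2"] r by auto
  obtain B2 where B2: "\<And>j. norm (T j) * (3*r/2) powi j \<le> B2"
    using bounded_laurent_terms[of "3*r/2"] r by auto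
  have B: "0 \<le> B1" "0 \<le> B2"
    using B1[of 0] B2[of 0] norm_ge_zero[of "T 0"] by (simp_all del: norm_ge_zero)
  have bound: "norm (T j) * r powi j \<le> (B1 + B2) * (2/3) ^ nat \<bar>j\<bar>" for j
  proof (cases "j \<ge> 0")
    case True
    define n where "n = nat j"
    have n: "j = int n" using True by (simp add: n_def)
    have "r ^ n = (3*r/2) ^ n * (2/3) ^ n" by (simp add: power_mult_distrib[symmetric])
    then have "norm (T j) * r powi j = norm (T j) * (3*r/2) powi j * (2/3) ^ n"
      by (simp add: n power_int_of_nat)
    also have "\<dots> \<le> (B1 + B2) * (2/3) ^ n"
      using B by (intro mult_right_mono order_trans[OF B2]) auto
    finally show ?thesis using n by simp
  next
    case False
    define n where "n = nat (- j)"
    have n: "j = - int n" using False by (simp add: n_def)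
    have "inverse (r ^ n) = inverse ((r/2) ^ n) * (1/2) ^ n"
      using r by (simp add: power_divide power_one_over inverse_eq_divide)
    then have "norm (T j) * r powi j = norm (T j) * (r/2) powi j * (1/2) ^ n"
      by (simp add: n power_int_minus power_int_of_nat)
    also have "\<dots> \<le> (B1 + B2) * (2/3) ^ n"
      using B B1[of j] by (intro mult_mono power_mono) auto
    finally show ?thesis using n by simp
  qed
  have "(\<lambda>j::int. (B1 + B2) * (2/3) ^ nat \<bar>j\<bar>) summable_on UNIV"
    by (rule summable_on_cmult_right[OF summable_on_power_abs_int]) auto
  then show ?thesis
    by (rule summable_on_comparison_test[OF _ bound]) (use r in simp)
qed


definition r0 :: real where "r0 = min \<epsilon> 1 / 4"

lemma r0: "0 < r0" "2 * r0 < \<epsilon>" "r0 < 1" "r0 < 1 + \<theta>"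
  using eps theta by (auto simp: r0_def)

lemma has_integral_laurent_integrand:
  assumes r: "0 < r" "r < 1 + \<theta>"
  shows "((\<lambda>\<phi>. laurent_integrand k (of_real r * cis \<phi>)) has_integral (2*pi) *\<^sub>R T k) {0..2*pi}"
proof -
  obtain C where C: "\<And>r. r \<in> {0<..<1+\<theta>} \<Longrightarrow> integral {0..2*pi} (\<lambda>\<phi>. laurent_integrand k (of_real r * cis \<phi>)) = C"
    using circle_integral_independent_of_radius[OF JJ_op_JX has_derivative_laurent_integrand
        continuous_on_laurent_integrand_deriv] by auto
  have "((\<lambda>j. cscale (op_cstruct JX) ((of_real r0 * cis \<phi>) powi j) (T j)) has_sum R (1 + of_real r0 * cis \<phi>)) UNIV" for \<phi>
    using laurent[rule_format, of "1 + of_real r0 * cis \<phi>"] r0 by (simp add: cscale_op_eq norm_mult)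
  then have "((\<lambda>\<phi>. laurent_integrand k (of_real r0 * cis \<phi>)) has_integral (2*pi) *\<^sub>R T k) {0..2*pi}"
    unfolding laurent_integrand_def
    by (rule laurent_coefficient_integral[OF complex_structure_op_JX r0(1) _ abs_summable_laurent[OF r0(1,2)]])
  then have "C = (2*pi) *\<^sub>R T k" using C r0 by (auto dest: integral_unique)
  moreover have "(\<lambda>\<phi>. laurent_integrand k (of_real r * cis \<phi>)) integrable_on {0..2*pi}"
    by (rule integrable_continuous_interval, rule continuous_on_compose2[OF continuous_on_laurent_integrand])
       (use r in \<open>auto intro!: continuous_intros simp: norm_mult\<close>)
  ultimately show ?thesis using C r by (metis greaterThanLessThan_iff integrable_integral)
qed

lemma norm_T_le:
  assumes r: "0 < r" "r < 1 + \<theta>"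
  obtains M where "\<And>k. norm (T k) \<le> M * r powi (-k)"
proof -
  have "compact ((\<lambda>\<phi>. R (1 + of_real r * cis \<phi>)) ` {0..2*pi})"
    by (rule compact_continuous_image, rule continuous_on_compose2[OF continuous_on_R])
       (use r in \<open>auto intro!: continuous_intros simp: norm_mult W_set_def\<close>)
  then obtain M where M: "M > 0" "\<And>\<phi>. \<phi> \<in> {0..2*pi} \<Longrightarrow> norm (R (1 + of_real r * cis \<phi>)) \<le> M"
    by (auto dest!: compact_imp_bounded simp: bounded_pos)
  have "norm (T k) \<le> M * r powi (-k)" for k
  proof -
    have bound: "norm (laurent_integrand k (of_real r * cis \<phi>)) \<le> r powi (-k) * M"
      if "\<phi> \<in> cbox 0 (2*pi)" for \<phi>
      using M(2)[of \<phi>] that r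
      by (simp add: laurent_integrand_def norm_cscale[OF complex_structure_op_JX] norm_power_int
          norm_mult mult_left_mono)
    have "((\<lambda>\<phi>. laurent_integrand k (of_real r * cis \<phi>)) has_integral (2*pi) *\<^sub>R T k) (cbox 0 (2*pi))"
      using has_integral_laurent_integrand[OF r] by (simp add: cbox_interval)
    from has_integral_bound[OF _ this bound] r M
    have "norm ((2*pi) *\<^sub>R T k) \<le> (r powi (-k) * M) * (2*pi)"
      by simp
    then show ?thesis by (simp add: field_simps)
  qed
  then show ?thesis using that by blast
qed

text \<open>Integrating an identity between the integrands over a circle inside the annulus yields
  the same identity between the Laurent coefficients.\<close>

lemma laurent_coeff_identity:
  fixes L1 L2 :: "('y \<Rightarrow>\<^sub>L 'x) \<Rightarrow> 'v::banach"
  assumes L: "bounded_linear L1" "bounded_linear L2"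
    and pointwise: "\<And>w. 0 < cmod w \<Longrightarrow> cmod w < 1 + \<theta> \<Longrightarrow>
      L1 (laurent_integrand k w) + L2 (laurent_integrand (k - 1) w) = cscale J (w powi (-k)) E"
  shows "L1 (T k) + L2 (T (k - 1)) = (if k = 0 then E else 0)"
proof -
  let ?w = "\<lambda>\<phi>. of_real r0 * cis \<phi>"
  have w: "0 < cmod (?w \<phi>)" "cmod (?w \<phi>) < 1 + \<theta>" for \<phi>
    using r0 by (auto simp: norm_mult)
  have "((\<lambda>\<phi>. L1 (laurent_integrand k (?w \<phi>)) + L2 (laurent_integrand (k - 1) (?w \<phi>))) has_integral
      L1 ((2*pi) *\<^sub>R T k) + L2 ((2*pi) *\<^sub>R T (k - 1))) {0..2*pi}"
    using has_integral_linear[OF has_integral_laurent_integrand[OF r0(1,4)] L(1)]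
      has_integral_linear[OF has_integral_laurent_integrand[OF r0(1,4)] L(2)]
    by (intro has_integral_add) (simp_all add: o_def)
  moreover have "((\<lambda>\<phi>. L1 (laurent_integrand k (?w \<phi>)) + L2 (laurent_integrand (k - 1) (?w \<phi>))) has_integral
      (if k = 0 then (2*pi) *\<^sub>R E else 0)) {0..2*pi}"
    unfolding pointwise[OF w] using has_integral_cscale_circle_power[of J r0 "-k" E] by simp
  ultimately have "(2*pi) *\<^sub>R (L1 (T k) + L2 (T (k - 1))) = (2*pi) *\<^sub>R (if k = 0 then E else 0)"
    by (auto dest: has_integral_unique simp: linear_simps[OF L(1)] linear_simps[OF L(2)] scaleR_add_right)
  then show ?thesis by simp
qed

lemma powi_minus_diff_one: "(w::complex) \<noteq> 0 \<Longrightarrow> w powi (- (k - 1)) = w powi (-k) * w"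
  using power_int_add[of w "-k" 1] by simp

text \<open>Comparing coefficients in R(z) A(z) = I and A(z) R(z) = I, with A(z) = C0 + A1 (z - 1).\<close>

lemma laurent_coeff_left_inverse: "(T k o\<^sub>L C0) + (T (k - 1) o\<^sub>L A1) = (if k = 0 then id_blinfun else 0)"
proof (rule laurent_coeff_identity[OF bounded_linear_blinfun_compose_right bounded_linear_blinfun_compose_right])
  fix w assume w: "0 < cmod w" "cmod w < 1 + \<theta>"
  note z = annulus_in_\<Omega>[OF w]
  have w0: "w \<noteq> 0" using w by auto
  have R_A1: "cscale (op_cstruct JX) w (R (1 + w) o\<^sub>L A1) = R (1 + w) o\<^sub>L cscale_op JY w A1"
    by (rule blinfun_eqI) (simp add: cscale_op_cstruct_apply cscale_op_eq R_cscale[OF z])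
  have "(laurent_integrand k w o\<^sub>L C0) + (laurent_integrand (k - 1) w o\<^sub>L A1)
      = cscale (op_cstruct JX) (w powi (-k))
          ((R (1 + w) o\<^sub>L C0) + cscale (op_cstruct JX) w (R (1 + w) o\<^sub>L A1))"
    unfolding laurent_integrand_def cscale_compose powi_minus_diff_one[OF w0]
      cscale_cscale[OF JJ_op_JX, symmetric] cscale_add_right ..
  also have "\<dots> = cscale (op_cstruct JX) (w powi (-k)) (R (1 + w) o\<^sub>L pencil (1 + w))"
    unfolding R_A1 pencil_one_plus blinfun_compose_add_right ..
  finally show "(laurent_integrand k w o\<^sub>L C0) + (laurent_integrand (k - 1) w o\<^sub>L A1)
      = cscale (op_cstruct JX) (w powi (-k)) id_blinfun"
    by (simp add: R_pencil[OF z])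
qed

lemma laurent_coeff_right_inverse: "(C0 o\<^sub>L T k) + (A1 o\<^sub>L T (k - 1)) = (if k = 0 then id_blinfun else 0)"
proof (rule laurent_coeff_identity[OF bounded_linear_blinfun_compose_left bounded_linear_blinfun_compose_left])
  fix w assume w: "0 < cmod w" "cmod w < 1 + \<theta>"
  note z = annulus_in_\<Omega>[OF w]
  have w0: "w \<noteq> 0" using w by auto
  have A1_R: "cscale (op_cstruct JY) w (A1 o\<^sub>L R (1 + w)) = cscale_op JY w A1 o\<^sub>L R (1 + w)"
    by (rule blinfun_eqI) (simp add: cscale_op_cstruct_apply cscale_op_eq)
  have "(C0 o\<^sub>L laurent_integrand k w) + (A1 o\<^sub>L laurent_integrand (k - 1) w)
      = cscale (op_cstruct JY) (w powi (-k))
          ((C0 o\<^sub>L R (1 + w)) + cscale (op_cstruct JY) w (A1 o\<^sub>L R (1 + w)))"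
    unfolding laurent_integrand_def clinear_op_compose_cscale[OF clinear_op_add[OF A0 A1]]
      clinear_op_compose_cscale[OF A1] powi_minus_diff_one[OF w0]
      cscale_cscale[OF JJ_op_JY, symmetric] cscale_add_right ..
  also have "\<dots> = cscale (op_cstruct JY) (w powi (-k)) (pencil (1 + w) o\<^sub>L R (1 + w))"
    unfolding A1_R pencil_one_plus blinfun_compose_add_left ..
  finally show "(C0 o\<^sub>L laurent_integrand k w) + (A1 o\<^sub>L laurent_integrand (k - 1) w)
      = cscale (op_cstruct JY) (w powi (-k)) id_blinfun"
    by (simp add: pencil_R[OF z])
qed


text \<open>Cauchy estimates on the circles of radius r0 < 1 and 1 + \<theta>/2 > 1.\<close>

lemma T_geometric_decay:
  obtains \<rho> Mn Mp where "0 < \<rho>" "\<rho> < 1" "0 \<le> Mn" "0 \<le> Mp"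
    "\<And>m. norm (T (- int m)) \<le> Mn * r0 ^ m" "\<And>n. norm (T (int n)) \<le> Mp * \<rho> ^ n"
proof -
  obtain Mn where Mn: "\<And>k. norm (T k) \<le> Mn * r0 powi (-k)"
    using norm_T_le[OF r0(1,4)] by blast
  define r1 where "r1 = 1 + \<theta> / 2"
  have r1: "0 < r1" "r1 < 1 + \<theta>" "1 < r1" using theta by (auto simp: r1_def)
  obtain Mp where Mp: "\<And>k. norm (T k) \<le> Mp * r1 powi (-k)"
    using norm_T_le[OF r1(1,2)] by blast
  show ?thesis
  proof (rule that)
    show "0 < inverse r1" "inverse r1 < 1" using r1 by (auto simp: inverse_less_1_iff)
    show "0 \<le> Mn" "0 \<le> Mp"
      using Mn[of 0] Mp[of 0] norm_ge_zero[of "T 0"] by (simp_all del: norm_ge_zero)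
    show "norm (T (- int m)) \<le> Mn * r0 ^ m" for m
      using Mn[of "- int m"] by (simp add: power_int_of_nat)
    show "norm (T (int n)) \<le> Mp * inverse r1 ^ n" for n
      using Mp[of "int n"] by (simp add: power_int_minus power_int_of_nat power_inverse)
  qed
qed

text \<open>A product T (-a) C T b that does not change along the diagonal vanishes, since its
  norm is O(r0 ^ q) after q steps.\<close>

lemma T_product_eq_0_if_shift_invariant:
  assumes shift: "\<And>q. T (- int (a + Suc q)) o\<^sub>L C o\<^sub>L T (int (b + Suc q)) = T (- int (a + q)) o\<^sub>L C o\<^sub>L T (int (b + q))"
  shows "T (- int a) o\<^sub>L C o\<^sub>L T (int b) = 0"
proof -
  obtain \<rho> Mn Mp where d: "0 < \<rho>" "\<rho> < 1" "0 \<le> Mn" "0 \<le> Mp"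
    "\<And>m. norm (T (- int m)) \<le> Mn * r0 ^ m" "\<And>n. norm (T (int n)) \<le> Mp * \<rho> ^ n"
    by (rule T_geometric_decay) blast
  define f where "f q = T (- int (a + q)) o\<^sub>L C o\<^sub>L T (int (b + q))" for q
  have bound: "norm (f q) \<le> (Mn * norm C * Mp) * r0 ^ q" for q
  proof -
    have "norm (f q) \<le> norm (T (- int (a + q))) * norm C * norm (T (int (b + q)))"
      unfolding f_def by (rule norm_blinfun_compose3)
    also have "\<dots> \<le> (Mn * r0 ^ (a + q)) * norm C * (Mp * \<rho> ^ (b + q))"
      using d r0 by (intro mult_mono d(5,6) order_refl) auto
    also have "\<dots> \<le> (Mn * r0 ^ q) * norm C * Mp"
    proof -
      have "r0 ^ (a + q) \<le> r0 ^ q" using r0 by (intro power_decreasing) auto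
      moreover have "\<rho> ^ (b + q) \<le> 1" using d by (intro power_le_one) auto
      ultimately show ?thesis using d r0 by (intro mult_mono mult_left_le order_refl) auto
    qed
    finally show ?thesis by (simp add: algebra_simps)
  qed
  have "f (Suc q) = f q" for q
    unfolding f_def by (rule shift)
  from const_seq_eq_0_if_geometric_bound[OF this bound] r0 show ?thesis
    by (simp add: f_def)
qed

lemma T_left_shift: "k \<noteq> 0 \<Longrightarrow> T k o\<^sub>L C0 = - (T (k - 1) o\<^sub>L A1)"
  using laurent_coeff_left_inverse[of k] by (simp add: eq_neg_iff_add_eq_0)

lemma T_right_shift: "k \<noteq> 0 \<Longrightarrow> A1 o\<^sub>L T (k - 1) = - (C0 o\<^sub>L T k)"
  using laurent_coeff_right_inverse[of k] by (simp add: eq_neg_iff_add_eq_0 add.commute)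

lemma T_neg_C0_T0:
  assumes m: "m \<ge> 1"
  shows "T (- int m) o\<^sub>L C0 o\<^sub>L T 0 = 0"
proof -
  have step: "T (- int (m + Suc q)) o\<^sub>L C0 o\<^sub>L T (int (Suc q)) = T (- int (m + q)) o\<^sub>L C0 o\<^sub>L T (int q)" for q
  proof -
    have "- int (m + q) - 1 = - int (m + Suc q)" "int (Suc q) - 1 = int q" by simp_all
    then have "T (- int (m + q)) o\<^sub>L C0 = - (T (- int (m + Suc q)) o\<^sub>L A1)"
      and "A1 o\<^sub>L T (int q) = - (C0 o\<^sub>L T (int (Suc q)))"
      using T_left_shift[of "- int (m + q)"] T_right_shift[of "int (Suc q)"] m by simp_all
    then show ?thesis by (simp add: blinfun_compose_assoc)
  qed
  show ?thesis
    using T_product_eq_0_if_shift_invariant[of m C0 0] step by (simp only: add_0 of_nat_0)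
qed

lemma T_minus1_A1_T_pos: "T (-1) o\<^sub>L A1 o\<^sub>L T (int n + 1) = 0"
proof -
  have step: "T (- int (1 + Suc q)) o\<^sub>L A1 o\<^sub>L T (int (n + 1 + Suc q)) = T (- int (1 + q)) o\<^sub>L A1 o\<^sub>L T (int (n + 1 + q))" for q
  proof -
    have "- int (1 + q) - 1 = - int (1 + Suc q)" "int (n + 1 + Suc q) - 1 = int (n + 1 + q)" by simp_all
    then have L: "T (- int (1 + q)) o\<^sub>L C0 = - (T (- int (1 + Suc q)) o\<^sub>L A1)"
      and R: "A1 o\<^sub>L T (int (n + 1 + q)) = - (C0 o\<^sub>L T (int (n + 1 + Suc q)))"
      using T_left_shift[of "- int (1 + q)"] T_right_shift[of "int (n + 1 + Suc q)"] by simp_all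
    have "T (- int (1 + q)) o\<^sub>L A1 o\<^sub>L T (int (n + 1 + q))
        = - (T (- int (1 + q)) o\<^sub>L C0 o\<^sub>L T (int (n + 1 + Suc q)))"
      unfolding blinfun_compose_assoc R by simp
    also have "\<dots> = T (- int (1 + Suc q)) o\<^sub>L A1 o\<^sub>L T (int (n + 1 + Suc q))"
      unfolding L by simp
    finally show ?thesis by (rule sym)
  qed
  have "T (- int 1) o\<^sub>L A1 o\<^sub>L T (int (n + 1)) = 0"
    by (rule T_product_eq_0_if_shift_invariant) (rule step)
  then show ?thesis by (simp add: add.commute)
qed


abbreviation "N_neg \<equiv> T (-1) o\<^sub>L C0"
abbreviation "N_pos \<equiv> T 0 o\<^sub>L A1"

lemma T_neg_step: "T (- int (Suc (Suc m))) = - (T (- int (Suc m)) o\<^sub>L C0 o\<^sub>L T (-1))"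
proof -
  let ?T = "T (- int (Suc (Suc m)))"
  have right: "(C0 o\<^sub>L T 0) + (A1 o\<^sub>L T (-1)) = id_blinfun"
    using laurent_coeff_right_inverse[of 0] by simp
  have left: "?T o\<^sub>L A1 = - (T (- int (Suc m)) o\<^sub>L C0)"
    using laurent_coeff_left_inverse[of "- int (Suc m)"] by (simp add: eq_neg_iff_add_eq_0 add.commute algebra_simps)
  have vanish: "?T o\<^sub>L C0 o\<^sub>L T 0 = 0" by (rule T_neg_C0_T0) simp
  have "?T = ?T o\<^sub>L ((C0 o\<^sub>L T 0) + (A1 o\<^sub>L T (-1)))"
    unfolding right by simp
  also have "\<dots> = (?T o\<^sub>L C0 o\<^sub>L T 0) + (?T o\<^sub>L A1 o\<^sub>L T (-1))"
    by (simp only: blinfun_compose_add_right[of ?T "C0 o\<^sub>L T 0"] blinfun_compose_assoc)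
  also have "\<dots> = - (T (- int (Suc m)) o\<^sub>L C0 o\<^sub>L T (-1))"
    unfolding vanish left by simp
  finally show ?thesis .
qed

lemma T_pos_step: "T (int (Suc n)) = - (T 0 o\<^sub>L A1 o\<^sub>L T (int n))"
proof -
  have left: "(T 0 o\<^sub>L C0) + (T (-1) o\<^sub>L A1) = id_blinfun"
    using laurent_coeff_left_inverse[of 0] by simp
  have right: "C0 o\<^sub>L T (int n + 1) = - (A1 o\<^sub>L T (int n))"
    using laurent_coeff_right_inverse[of "int n + 1"] by (simp add: eq_neg_iff_add_eq_0)
  have "T (int (Suc n)) = ((T 0 o\<^sub>L C0) + (T (-1) o\<^sub>L A1)) o\<^sub>L T (int n + 1)"
    unfolding left by (simp add: add.commute)
  also have "\<dots> = (T 0 o\<^sub>L (C0 o\<^sub>L T (int n + 1))) + (T (-1) o\<^sub>L A1 o\<^sub>L T (int n + 1))"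
    by (simp only: blinfun_compose_add_left[of "T 0 o\<^sub>L C0"] blinfun_compose_assoc)
  also have "\<dots> = - (T 0 o\<^sub>L A1 o\<^sub>L T (int n))"
    unfolding right T_minus1_A1_T_pos by (simp add: blinfun_compose_assoc)
  finally show ?thesis .
qed

lemma T_neg_eq: "T (- int (Suc m)) = ((-1) ^ m) *\<^sub>R (op_pow N_neg m o\<^sub>L T (-1))"
proof (induction m)
  case (Suc m)
  have "T (- int (Suc (Suc m))) = - (T (- int (Suc m)) o\<^sub>L C0 o\<^sub>L T (-1))" by (rule T_neg_step)
  also have "\<dots> = - (((-1) ^ m) *\<^sub>R (op_pow N_neg m o\<^sub>L N_neg o\<^sub>L T (-1)))"
    unfolding Suc by (simp add: blinfun_compose_assoc)
  also have "\<dots> = ((-1) ^ Suc m) *\<^sub>R (op_pow N_neg (Suc m) o\<^sub>L T (-1))"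
    by (simp only: op_pow_Suc') simp
  finally show ?case .
qed simp

lemma T_pos_eq: "T (int n) = ((-1) ^ n) *\<^sub>R (op_pow N_pos n o\<^sub>L T 0)"
proof (induction n)
  case (Suc n)
  have "T (int (Suc n)) = - (T 0 o\<^sub>L A1 o\<^sub>L T (int n))" by (rule T_pos_step)
  also have "\<dots> = ((-1) ^ Suc n) *\<^sub>R (op_pow N_pos (Suc n) o\<^sub>L T 0)"
    unfolding Suc by (simp add: blinfun_compose_assoc)
  finally show ?case .
qed simp

lemma norm_pow_N_neg_le:
  obtains K where "\<And>m. norm (op_pow N_neg m) \<le> K * r0 ^ m"
proof -
  obtain \<rho> Mn Mp where d: "0 \<le> Mn" "\<And>m. norm (T (- int m)) \<le> Mn * r0 ^ m"
    by (rule T_geometric_decay) blast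
  define K where "K = max 1 (Mn * norm C0)"
  have "norm (op_pow N_neg m) \<le> K * r0 ^ m" for m
  proof (cases m)
    case 0
    then show ?thesis by (simp add: K_def order_trans[OF norm_blinfun_id_le])
  next
    case (Suc m')
    have "op_pow N_neg m = op_pow N_neg m' o\<^sub>L T (-1) o\<^sub>L C0"
      using Suc by (simp only: op_pow_Suc' blinfun_compose_assoc)
    also have "op_pow N_neg m' o\<^sub>L T (-1) = ((-1) ^ m') *\<^sub>R T (- int (Suc m'))"
      unfolding T_neg_eq[of m'] scaleR_scaleR by (simp flip: power_mult_distrib)
    finally have "op_pow N_neg m = ((-1) ^ m') *\<^sub>R T (- int (Suc m')) o\<^sub>L C0" .
    then have "norm (op_pow N_neg m) \<le> norm (T (- int (Suc m'))) * norm C0"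
      by (simp add: norm_power order_trans[OF norm_blinfun_compose])
    also have "\<dots> \<le> Mn * r0 ^ m * norm C0"
      using d(2)[of "Suc m'"] Suc by (intro mult_right_mono) auto
    also have "\<dots> \<le> K * r0 ^ m"
      using r0 by (simp add: K_def mult.commute mult.left_commute mult_right_mono)
    finally show ?thesis .
  qed
  then show ?thesis using that by blast
qed

lemma norm_pow_N_pos_le:
  obtains K \<rho> where "0 \<le> \<rho>" "\<rho> < 1" "\<And>n. norm (op_pow N_pos n) \<le> K * \<rho> ^ n"
proof -
  obtain \<rho> Mn Mp where d: "0 < \<rho>" "\<rho> < 1" "0 \<le> Mp" "\<And>n. norm (T (int n)) \<le> Mp * \<rho> ^ n"
    by (rule T_geometric_decay) blast
  define K where "K = max 1 (Mp * norm A1 / \<rho>)"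
  have "norm (op_pow N_pos n) \<le> K * \<rho> ^ n" for n
  proof (cases n)
    case 0
    then show ?thesis by (simp add: K_def order_trans[OF norm_blinfun_id_le])
  next
    case (Suc n')
    have "op_pow N_pos n = op_pow N_pos n' o\<^sub>L T 0 o\<^sub>L A1"
      using Suc by (simp only: op_pow_Suc' blinfun_compose_assoc)
    also have "op_pow N_pos n' o\<^sub>L T 0 = ((-1) ^ n') *\<^sub>R T (int n')"
      unfolding T_pos_eq[of n'] scaleR_scaleR by (simp flip: power_mult_distrib)
    finally have "op_pow N_pos n = ((-1) ^ n') *\<^sub>R T (int n') o\<^sub>L A1" .
    then have "norm (op_pow N_pos n) \<le> norm (T (int n')) * norm A1"
      by (simp add: norm_power order_trans[OF norm_blinfun_compose])
    also have "\<dots> \<le> Mp * \<rho> ^ n' * norm A1"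
      using d by (intro mult_right_mono) auto
    also have "\<dots> = (Mp * norm A1 / \<rho>) * \<rho> ^ n"
      using Suc d by (simp add: field_simps)
    also have "\<dots> \<le> K * \<rho> ^ n"
      using d by (intro mult_right_mono) (auto simp: K_def)
    finally show ?thesis .
  qed
  with d(1,2) show ?thesis by (intro that) auto
qed


section \<open>Maclaurin coefficients of the resolvent at 0\<close>

lemma summable_T_neg_binomial:
  assumes "binomially_bounded \<beta>"
  shows "summable (\<lambda>m. \<beta> m *\<^sub>R T (- int (Suc m)))"
proof -
  obtain \<rho> Mn Mp where "0 \<le> Mn" and Mn: "\<And>m. norm (T (- int m)) \<le> Mn * r0 ^ m"
    by (rule T_geometric_decay) blast
  have "norm (T (- int (Suc m))) \<le> (Mn * r0) * r0 ^ m" for m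
    using Mn[of "Suc m"] by (simp add: algebra_simps)
  then show ?thesis
    using r0 by (intro summable_binomially_bounded_scaleR[OF assms]) auto
qed

lemma summable_T_pos_binomial:
  assumes "binomially_bounded \<beta>"
  shows "summable (\<lambda>m. \<beta> m *\<^sub>R T (int m))"
proof -
  obtain \<rho> Mn Mp where "0 < \<rho>" "\<rho> < 1" and Mp: "\<And>n. norm (T (int n)) \<le> Mp * \<rho> ^ n"
    by (rule T_geometric_decay) blast
  then show ?thesis by (intro summable_binomially_bounded_scaleR[OF assms Mp]) auto
qed

text \<open>By the right identity A0 T (-m-1) = - A1 T (-m-2) - A1 T (-m-1), so the combination
  below telescopes.\<close>

lemma A0_compose_sing_series:
  assumes "binomially_bounded \<beta>" "binomially_bounded \<gamma>" "binomially_bounded (\<lambda>m. \<gamma> m - \<beta> m)"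
    and shift: "\<And>m. \<gamma> (Suc m) - \<beta> (Suc m) = \<beta> m"
  shows "(A0 o\<^sub>L (\<Sum>m. \<beta> m *\<^sub>R T (- int (Suc m)))) + (A1 o\<^sub>L (\<Sum>m. \<gamma> m *\<^sub>R T (- int (Suc m))))
          = (\<gamma> 0 - \<beta> 0) *\<^sub>R (A1 o\<^sub>L T (-1))"
proof -
  define a where "a m = A1 o\<^sub>L T (- int (Suc m))" for m
  define p where "p m = \<gamma> m - \<beta> m" for m
  have A0_T: "A0 o\<^sub>L T (- int (Suc m)) = - a (Suc m) - a m" for m
  proof -
    have "- int (Suc m) - 1 = - int (Suc (Suc m))" by simp
    then have "(C0 o\<^sub>L T (- int (Suc m))) + (A1 o\<^sub>L T (- int (Suc (Suc m)))) = 0"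
      using laurent_coeff_right_inverse[of "- int (Suc m)"] by simp
    then show ?thesis
      unfolding a_def blinfun_compose_add_left by (simp add: algebra_simps eq_neg_iff_add_eq_0)
  qed
  note compose = bounded_linear_blinfun_compose_left
  note summable = summable_T_neg_binomial[OF assms(1)] summable_T_neg_binomial[OF assms(2)]
  have lim: "(\<lambda>m. p m *\<^sub>R a m) \<longlonglongrightarrow> 0"
    using summable_LIMSEQ_zero[OF bounded_linear.summable[OF compose[of A1] summable_T_neg_binomial[OF assms(3)]]]
    by (simp add: a_def p_def)
  have telescope: "(\<Sum>m. p m *\<^sub>R a m - p (Suc m) *\<^sub>R a (Suc m)) = p 0 *\<^sub>R a 0"
    using sums_unique[OF telescope_sums'[OF lim]] by simp
  have "(A0 o\<^sub>L (\<Sum>m. \<beta> m *\<^sub>R T (- int (Suc m)))) + (A1 o\<^sub>L (\<Sum>m. \<gamma> m *\<^sub>R T (- int (Suc m))))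
      = (\<Sum>m. \<beta> m *\<^sub>R (A0 o\<^sub>L T (- int (Suc m)))) + (\<Sum>m. \<gamma> m *\<^sub>R a m)"
    using bounded_linear.suminf[OF compose[of A0] summable(1)] bounded_linear.suminf[OF compose[of A1] summable(2)]
    by (simp add: a_def)
  also have "\<dots> = (\<Sum>m. \<beta> m *\<^sub>R (A0 o\<^sub>L T (- int (Suc m))) + \<gamma> m *\<^sub>R a m)"
    using bounded_linear.summable[OF compose[of A0] summable(1)] bounded_linear.summable[OF compose[of A1] summable(2)]
    by (intro suminf_add) (simp_all add: a_def)
  also have "\<dots> = (\<Sum>m. p m *\<^sub>R a m - p (Suc m) *\<^sub>R a (Suc m))"
    unfolding A0_T p_def shift by (simp add: algebra_simps)
  finally show ?thesis
    unfolding telescope by (simp add: a_def p_def)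
qed

text \<open>Similarly A0 T (n+1) = - A1 T n - A1 T (n+1) and A0 T 0 = I - A1 T (-1) - A1 T 0.\<close>

lemma A0_compose_reg_series:
  assumes "binomially_bounded \<beta>" "binomially_bounded \<gamma>" "binomially_bounded (\<lambda>l. \<beta> (Suc l))"
    and shift: "\<And>l. \<gamma> (Suc l) = \<beta> (Suc l) + \<beta> (Suc (Suc l))"
  shows "(A0 o\<^sub>L (\<Sum>l. \<beta> l *\<^sub>R T (int l))) + (A1 o\<^sub>L (\<Sum>l. \<gamma> l *\<^sub>R T (int l)))
          = \<beta> 0 *\<^sub>R (id_blinfun - (A1 o\<^sub>L T (-1))) + (\<gamma> 0 - \<beta> 0 - \<beta> 1) *\<^sub>R (A1 o\<^sub>L T 0)"
proof -
  define e where "e l = A1 o\<^sub>L T (int l)" for l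
  have A0_T0: "A0 o\<^sub>L T 0 = id_blinfun - (A1 o\<^sub>L T (-1)) - e 0"
    using laurent_coeff_right_inverse[of 0]
    by (simp add: e_def blinfun_compose_add_left algebra_simps eq_diff_eq)
  have A0_T: "A0 o\<^sub>L T (int (Suc l)) = - e l - e (Suc l)" for l
  proof -
    have "(C0 o\<^sub>L T (int l + 1)) + (A1 o\<^sub>L T (int l)) = 0"
      using laurent_coeff_right_inverse[of "int l + 1"] by simp
    then show ?thesis
      by (simp add: e_def blinfun_compose_add_left algebra_simps eq_neg_iff_add_eq_0)
  qed
  define f where "f l = \<beta> l *\<^sub>R (A0 o\<^sub>L T (int l)) + \<gamma> l *\<^sub>R e l" for l
  note compose = bounded_linear_blinfun_compose_left
  note summable = summable_T_pos_binomial[OF assms(1)] summable_T_pos_binomial[OF assms(2)]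
  have "summable f"
    unfolding f_def
    using bounded_linear.summable[OF compose[of A0] summable(1)] bounded_linear.summable[OF compose[of A1] summable(2)]
    by (intro summable_add) (simp_all add: e_def)
  define P where "P l = - \<beta> (Suc l)" for l
  have lim: "(\<lambda>l. P l *\<^sub>R e l) \<longlonglongrightarrow> 0"
    using tendsto_minus[OF summable_LIMSEQ_zero[OF
        bounded_linear.summable[OF compose[of A1] summable_T_pos_binomial[OF assms(3)]]]]
    by (simp add: P_def e_def)
  have telescope: "(\<Sum>l. P l *\<^sub>R e l - P (Suc l) *\<^sub>R e (Suc l)) = P 0 *\<^sub>R e 0"
    using sums_unique[OF telescope_sums'[OF lim]] by simp
  have "(A0 o\<^sub>L (\<Sum>l. \<beta> l *\<^sub>R T (int l))) + (A1 o\<^sub>L (\<Sum>l. \<gamma> l *\<^sub>R T (int l))) = suminf f"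
    using bounded_linear.suminf[OF compose[of A0] summable(1)] bounded_linear.suminf[OF compose[of A1] summable(2)]
      bounded_linear.summable[OF compose[of A0] summable(1)] bounded_linear.summable[OF compose[of A1] summable(2)]
    by (simp add: f_def[abs_def] e_def suminf_add)
  also have "\<dots> = f 0 + (\<Sum>l. f (Suc l))"
    using suminf_split_head[OF \<open>summable f\<close>] by simp
  also have "(\<lambda>l. f (Suc l)) = (\<lambda>l. P l *\<^sub>R e l - P (Suc l) *\<^sub>R e (Suc l))"
    unfolding f_def A0_T shift P_def by (simp add: algebra_simps)
  finally show ?thesis
    unfolding telescope by (simp add: f_def A0_T0 P_def e_def algebra_simps)
qed

definition sing_weight :: "nat \<Rightarrow> nat \<Rightarrow> real" where
  "sing_weight s m = (-1) ^ Suc m * real ((s + m) choose s)"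

definition reg_weight :: "nat \<Rightarrow> nat \<Rightarrow> real" where
  "reg_weight s l = (-1) ^ l * real (l choose s) * (-1) ^ s"

text \<open>Expanding (z - 1)^-(m+1) and (z - 1)^l in powers of z gives the s-th Maclaurin coefficients
  of the singular and of the regular part of R.\<close>

definition sing_coeff :: "nat \<Rightarrow> 'y \<Rightarrow>\<^sub>L 'x" where
  "sing_coeff s = (\<Sum>m. sing_weight s m *\<^sub>R T (- int (Suc m)))"

definition reg_coeff :: "nat \<Rightarrow> 'y \<Rightarrow>\<^sub>L 'x" where
  "reg_coeff s = (\<Sum>l. reg_weight s l *\<^sub>R T (int l))"

definition maclaurin_coeff :: "nat \<Rightarrow> 'y \<Rightarrow>\<^sub>L 'x" where
  "maclaurin_coeff s = sing_coeff s + reg_coeff s"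

lemma binomially_bounded_sing_weight: "binomially_bounded (sing_weight s)"
  by (rule binomially_boundedI[of _ s]) (simp add: sing_weight_def abs_mult add.commute)

lemma binomially_bounded_reg_weight: "binomially_bounded (reg_weight s)"
  by (rule binomially_boundedI[of _ s]) (simp add: reg_weight_def abs_mult binomial_right_mono)

lemma summable_sing_series: "summable (\<lambda>m. sing_weight s m *\<^sub>R T (- int (Suc m)))"
  by (rule summable_T_neg_binomial[OF binomially_bounded_sing_weight])

lemma summable_reg_series: "summable (\<lambda>l. reg_weight s l *\<^sub>R T (int l))"
  by (rule summable_T_pos_binomial[OF binomially_bounded_reg_weight])

lemma A0_sing_coeff_0: "A0 o\<^sub>L sing_coeff 0 = A1 o\<^sub>L T (-1)"
  using A0_compose_sing_series[of "sing_weight 0" "\<lambda>_. 0"]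
  by (simp add: sing_coeff_def sing_weight_def binomially_bounded_sing_weight
      binomially_boundedI[of _ 0])

lemma A0_sing_coeff_Suc: "(A0 o\<^sub>L sing_coeff (Suc s)) + (A1 o\<^sub>L sing_coeff s) = 0"
proof -
  have "sing_weight s m - sing_weight (Suc s) m = (-1) ^ m * real ((s + m) choose Suc s)" for m
    by (simp add: sing_weight_def algebra_simps)
  moreover have "binomially_bounded (\<lambda>m. (-1) ^ m * real ((s + m) choose Suc s))"
    by (rule binomially_boundedI[of _ "Suc s"]) (simp add: abs_mult binomial_right_mono del: binomial_Suc_Suc)
  ultimately have "binomially_bounded (\<lambda>m. sing_weight s m - sing_weight (Suc s) m)"
    by simp
  moreover have "sing_weight s (Suc m) - sing_weight (Suc s) (Suc m) = sing_weight (Suc s) m" for m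
    by (simp add: sing_weight_def algebra_simps)
  ultimately have "(A0 o\<^sub>L sing_coeff (Suc s)) + (A1 o\<^sub>L sing_coeff s)
      = (sing_weight s 0 - sing_weight (Suc s) 0) *\<^sub>R (A1 o\<^sub>L T (-1))"
    unfolding sing_coeff_def
    by (rule A0_compose_sing_series[OF binomially_bounded_sing_weight binomially_bounded_sing_weight])
  then show ?thesis by (simp add: sing_weight_def)
qed

lemma A0_reg_coeff_0: "A0 o\<^sub>L reg_coeff 0 = id_blinfun - (A1 o\<^sub>L T (-1))"
  using A0_compose_reg_series[of "reg_weight 0" "\<lambda>_. 0"]
  by (simp add: reg_coeff_def reg_weight_def binomially_bounded_reg_weight binomially_boundedI[of _ 0])

lemma A0_reg_coeff_Suc: "(A0 o\<^sub>L reg_coeff (Suc s)) + (A1 o\<^sub>L reg_coeff s) = 0"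
proof -
  have "binomially_bounded (\<lambda>l. reg_weight (Suc s) (Suc l))"
    by (rule binomially_boundedI[of _ "Suc s"])
       (simp add: reg_weight_def abs_mult binomial_right_mono del: binomial_Suc_Suc)
  moreover have "reg_weight s (Suc l) = reg_weight (Suc s) (Suc l) + reg_weight (Suc s) (Suc (Suc l))" for l
    by (simp add: reg_weight_def algebra_simps)
  ultimately have "(A0 o\<^sub>L reg_coeff (Suc s)) + (A1 o\<^sub>L reg_coeff s)
      = reg_weight (Suc s) 0 *\<^sub>R (id_blinfun - (A1 o\<^sub>L T (-1)))
        + (reg_weight s 0 - reg_weight (Suc s) 0 - reg_weight (Suc s) 1) *\<^sub>R (A1 o\<^sub>L T 0)"
    unfolding reg_coeff_def
    by (rule A0_compose_reg_series[OF binomially_bounded_reg_weight binomially_bounded_reg_weight])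
  moreover have "reg_weight (Suc s) 0 = 0" "reg_weight s 0 - reg_weight (Suc s) 0 - reg_weight (Suc s) 1 = 0"
    by (cases s; simp add: reg_weight_def)+
  ultimately show ?thesis by simp
qed

lemma sing_coeff_eq:
  "sing_coeff s = - (op_pow (op_inv (id_blinfun - (T (-1) o\<^sub>L C0))) (s + 1) o\<^sub>L T (-1))"
proof -
  obtain K where K: "\<And>m. norm (op_pow N_neg m) \<le> K * r0 ^ m"
    by (rule norm_pow_N_neg_le) blast
  note neumann = neumann_series_power[OF K _ r0(3), of s]
  have "sing_weight s m *\<^sub>R T (- int (Suc m)) = - ((real ((m + s) choose s) *\<^sub>R op_pow N_neg m) o\<^sub>L T (-1))" for m
  proof -
    have "(-1::real) ^ Suc m * (-1) ^ m = -1" by (simp flip: power_mult_distrib)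
    then show ?thesis unfolding T_neg_eq sing_weight_def scaleR_scaleR
      by (simp add: add.commute mult.assoc[symmetric])
  qed
  then have "sing_coeff s = (\<Sum>m. - ((real ((m + s) choose s) *\<^sub>R op_pow N_neg m) o\<^sub>L T (-1)))"
    by (simp add: sing_coeff_def)
  also have "\<dots> = - ((\<Sum>m. real ((m + s) choose s) *\<^sub>R op_pow N_neg m) o\<^sub>L T (-1))"
  proof -
    note compose = bounded_linear_blinfun_compose_right[of "T (-1)"]
    have "summable (\<lambda>m. real ((m + s) choose s) *\<^sub>R op_pow N_neg m)" using neumann(1) r0 by simp
    from bounded_linear.summable[OF compose this] bounded_linear.suminf[OF compose this]
    show ?thesis by (simp add: suminf_minus)
  qed
  also have "(\<Sum>m. real ((m + s) choose s) *\<^sub>R op_pow N_neg m) = op_pow (op_inv (id_blinfun - N_neg)) (Suc s)"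
    using neumann(2) r0 by simp
  finally show ?thesis by simp
qed

lemma reg_coeff_eq: "reg_coeff s = ((-1::real) ^ s) *\<^sub>R
    (op_pow (op_inv (id_blinfun - (T 0 o\<^sub>L A1))) (s + 1) o\<^sub>L op_pow (T 0 o\<^sub>L A1) s o\<^sub>L T 0)"
proof -
  obtain \<rho> K where K: "0 \<le> \<rho>" "\<rho> < 1" "\<And>n. norm (op_pow N_pos n) \<le> K * \<rho> ^ n"
    by (rule norm_pow_N_pos_le) blast
  note neumann = neumann_series_power[OF K(3) K(1) K(2), of s]
  define h where "h l = ((-1::real) ^ s * real (l choose s)) *\<^sub>R (op_pow N_pos l o\<^sub>L T 0)" for l
  have "reg_weight s l *\<^sub>R T (int l) = h l" for l
  proof -
    have "((-1::real) ^ l * (-1) ^ l) = 1" by (simp flip: power_mult_distrib)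
    then show ?thesis unfolding T_pos_eq reg_weight_def h_def scaleR_scaleR
      by (simp add: algebra_simps)
  qed
  then have "reg_coeff s = suminf h" and "summable h"
    using summable_reg_series[of s] by (simp_all add: reg_coeff_def)
  moreover have "h l = 0" if "l < s" for l using that by (simp add: h_def)
  ultimately have "reg_coeff s = (\<Sum>m. h (m + s))"
    using sums_unique[OF iffD2[OF sums_zero_iff_shift[of s h]]] summable_sums by metis
  also have "(\<lambda>m. h (m + s)) = (\<lambda>m. ((-1::real) ^ s) *\<^sub>R ((real ((m + s) choose s) *\<^sub>R op_pow N_pos m) o\<^sub>L (op_pow N_pos s o\<^sub>L T 0)))"
    unfolding h_def op_pow_add by (simp add: blinfun_compose_assoc)
  also have "(\<Sum>m. ((-1::real) ^ s) *\<^sub>R ((real ((m + s) choose s) *\<^sub>R op_pow N_pos m) o\<^sub>L (op_pow N_pos s o\<^sub>L T 0)))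
      = ((-1::real) ^ s) *\<^sub>R ((\<Sum>m. real ((m + s) choose s) *\<^sub>R op_pow N_pos m) o\<^sub>L (op_pow N_pos s o\<^sub>L T 0))"
    unfolding bounded_linear.suminf[OF bounded_linear_blinfun_compose_right neumann(1)]
    by (rule suminf_scaleR_right[OF bounded_linear.summable[OF bounded_linear_blinfun_compose_right neumann(1)],
        symmetric])
  also have "(\<Sum>m. real ((m + s) choose s) *\<^sub>R op_pow N_pos m) = op_pow (op_inv (id_blinfun - N_pos)) (Suc s)"
    by (rule neumann(2)[symmetric])
  finally show ?thesis by (simp only: Suc_eq_plus1 blinfun_compose_assoc)
qed

lemma A0_maclaurin_coeff_0: "A0 o\<^sub>L maclaurin_coeff 0 = id_blinfun"
  unfolding maclaurin_coeff_def blinfun_compose_add_right A0_sing_coeff_0 A0_reg_coeff_0 by simp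

lemma A0_maclaurin_coeff_Suc: "(A0 o\<^sub>L maclaurin_coeff (Suc s)) + (A1 o\<^sub>L maclaurin_coeff s) = 0"
  using A0_sing_coeff_Suc[of s] A0_reg_coeff_Suc[of s]
  by (simp add: maclaurin_coeff_def blinfun_compose_add_right algebra_simps)

lemma inj_A0: "inj A0"
proof (rule inj_on_inverseI)
  have "0 \<in> \<Omega>" using eps by (simp add: V_set_def)
  moreover have "pencil 0 = A0" by (simp add: pencil_def cscale_op_def)
  ultimately show "R 0 (A0 x) = x" for x by (metis R_pencil_apply)
qed

lemma solution_eq_convolution:
  fixes G :: "int \<Rightarrow> 'y" and x :: "int \<Rightarrow> 'x"
  assumes x0: "x (-1) = c" and rec: "\<And>t. t \<ge> 0 \<Longrightarrow> A0 (x t) + A1 (x (t - 1)) = G t"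
  shows "x (int t) = (\<Sum>s=0..t. maclaurin_coeff s (G (int t - int s))) - maclaurin_coeff t (A1 c)"
proof -
  define S where "S t = (\<Sum>s=0..t. maclaurin_coeff s (G (int t - int s))) - maclaurin_coeff t (A1 c)" for t
  have K0: "A0 (maclaurin_coeff 0 v) = v" for v
    using A0_maclaurin_coeff_0 by (metis blinfun_apply_blinfun_compose id_blinfun.rep_eq)
  have KSuc: "A0 (maclaurin_coeff (Suc s) v) = - A1 (maclaurin_coeff s v)" for s v
    using arg_cong[OF A0_maclaurin_coeff_Suc, of "\<lambda>K. K v"]
    by (simp add: blinfun.add_left eq_neg_iff_add_eq_0)
  have S0: "A0 (S 0) + A1 c = G 0"
    by (simp add: S_def blinfun.diff_right K0)
  have S_Suc: "A0 (S (Suc t)) + A1 (S t) = G (int (Suc t))" for t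
  proof -
    have "(\<Sum>s=0..Suc t. maclaurin_coeff s (G (int (Suc t) - int s)))
        = maclaurin_coeff 0 (G (int (Suc t))) + (\<Sum>s=0..t. maclaurin_coeff (Suc s) (G (int t - int s)))"
      by (subst sum.atLeast0_atMost_Suc_shift) (simp add: o_def)
    then show ?thesis
      by (simp add: S_def blinfun.diff_right blinfun.add_right blinfun.sum_right K0 KSuc sum_negf)
  qed
  have "x (int t) = S t"
  proof (induction t)
    case 0
    have "A0 (x 0) = A0 (S 0)"
      using rec[of 0] S0 x0 by (simp add: eq_diff_eq[symmetric])
    then show ?case by (simp add: injD[OF inj_A0])
  next
    case (Suc t)
    have "A0 (x (int (Suc t))) + A1 (x (int t)) = G (int (Suc t))"
      using rec[of "int (Suc t)"] by simp
    then have "A0 (x (int (Suc t))) = A0 (S (Suc t))"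
      using S_Suc[of t] Suc by (simp add: eq_diff_eq[symmetric])
    then show ?case by (rule injD[OF inj_A0])
  qed
  then show ?thesis by (simp add: S_def)
qed

lemma sing_series_eq:
  fixes G :: "int \<Rightarrow> 'y"
  shows "summable (\<lambda>m. ((-1::real) ^ Suc m) *\<^sub>R T (- int (Suc m)) (nabla_neg G (Suc m) t))"
    and "(\<Sum>m. ((-1::real) ^ Suc m) *\<^sub>R T (- int (Suc m)) (nabla_neg G (Suc m) t))
         = (\<Sum>s=0..t. sing_coeff s (G (int t - int s)))"
proof -
  have terms: "((-1::real) ^ Suc m) *\<^sub>R T (- int (Suc m)) (nabla_neg G (Suc m) t)
      = (\<Sum>s=0..t. (sing_weight s m *\<^sub>R T (- int (Suc m))) (G (int t - int s)))" for m
    by (simp add: nabla_neg_def blinfun.sum_right blinfun.scaleR_right scaleR_sum_right sing_weight_def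
        blinfun.scaleR_left blinfun.minus_left scaleR_scaleR)
  note summable = bounded_linear.summable[OF blinfun.bounded_linear_left summable_sing_series]
  show "summable (\<lambda>m. ((-1::real) ^ Suc m) *\<^sub>R T (- int (Suc m)) (nabla_neg G (Suc m) t))"
    unfolding terms by (rule summable_sum) (rule summable)
  have "(\<Sum>m. ((-1::real) ^ Suc m) *\<^sub>R T (- int (Suc m)) (nabla_neg G (Suc m) t))
      = (\<Sum>s=0..t. \<Sum>m. (sing_weight s m *\<^sub>R T (- int (Suc m))) (G (int t - int s)))"
    unfolding terms by (rule suminf_sum) (rule summable)
  also have "\<dots> = (\<Sum>s=0..t. sing_coeff s (G (int t - int s)))"
    unfolding sing_coeff_def
    by (intro sum.cong refl bounded_linear.suminf[OF blinfun.bounded_linear_left summable_sing_series, symmetric])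
  finally show "(\<Sum>m. ((-1::real) ^ Suc m) *\<^sub>R T (- int (Suc m)) (nabla_neg G (Suc m) t))
      = (\<Sum>s=0..t. sing_coeff s (G (int t - int s)))" .
qed

lemma reg_series_eq:
  fixes G :: "int \<Rightarrow> 'y"
  shows "summable (\<lambda>l. ((-1::real) ^ l) *\<^sub>R T (int l) (nabla_pos_plus G l t))"
    and "(\<Sum>l. ((-1::real) ^ l) *\<^sub>R T (int l) (nabla_pos_plus G l t))
         = (\<Sum>s=0..t. reg_coeff s (G (int t - int s)))"
proof -
  have "nabla_pos_plus G l t = (\<Sum>s=0..t. (real (l choose s) * (-1) ^ s) *\<^sub>R G (int t - int s))" for l
    unfolding nabla_pos_plus_def by (rule sum.mono_neutral_left) auto
  then have terms: "((-1::real) ^ l) *\<^sub>R T (int l) (nabla_pos_plus G l t)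
      = (\<Sum>s=0..t. (reg_weight s l *\<^sub>R T (int l)) (G (int t - int s)))" for l
    by (simp add: blinfun.sum_right blinfun.scaleR_right scaleR_sum_right reg_weight_def
        blinfun.scaleR_left scaleR_scaleR algebra_simps)
  note summable = bounded_linear.summable[OF blinfun.bounded_linear_left summable_reg_series]
  show "summable (\<lambda>l. ((-1::real) ^ l) *\<^sub>R T (int l) (nabla_pos_plus G l t))"
    unfolding terms by (rule summable_sum) (rule summable)
  have "(\<Sum>l. ((-1::real) ^ l) *\<^sub>R T (int l) (nabla_pos_plus G l t))
      = (\<Sum>s=0..t. \<Sum>l. (reg_weight s l *\<^sub>R T (int l)) (G (int t - int s)))"
    unfolding terms by (rule suminf_sum) (rule summable)
  also have "\<dots> = (\<Sum>s=0..t. reg_coeff s (G (int t - int s)))"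
    unfolding reg_coeff_def
    by (intro sum.cong refl bounded_linear.suminf[OF blinfun.bounded_linear_left summable_reg_series, symmetric])
  finally show "(\<Sum>l. ((-1::real) ^ l) *\<^sub>R T (int l) (nabla_pos_plus G l t))
      = (\<Sum>s=0..t. reg_coeff s (G (int t - int s)))" .
qed

lemma solution_eq_series:
  fixes G :: "int \<Rightarrow> 'y" and x :: "int \<Rightarrow> 'x"
  assumes "x (-1) = c" and "\<And>t. t \<ge> 0 \<Longrightarrow> A0 (x t) + A1 (x (t - 1)) = G t"
  shows "summable (\<lambda>m. ((-1::real) ^ Suc m) *\<^sub>R T (- int (Suc m)) (nabla_neg G (Suc m) t))"
    and "summable (\<lambda>l. ((-1::real) ^ l) *\<^sub>R T (int l) (nabla_pos_plus G l t))"
    and "x (int t) =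
       (\<Sum>m. ((-1::real) ^ Suc m) *\<^sub>R T (- int (Suc m)) (nabla_neg G (Suc m) t)) - sing_coeff t (A1 c)
       + (\<Sum>l. ((-1::real) ^ l) *\<^sub>R T (int l) (nabla_pos_plus G l t)) - reg_coeff t (A1 c)"
  using sing_series_eq[of G t] reg_series_eq[of G t] solution_eq_convolution[OF assms, of t]
  by (simp_all add: maclaurin_coeff_def blinfun.add_left sum.distrib algebra_simps)

end

theorem proposition6p1:
  fixes JX :: "'x::banach \<Rightarrow>\<^sub>L 'x" and JY :: "'y::banach \<Rightarrow>\<^sub>L 'y"
    and A0 A1 F0 F1 :: "'x \<Rightarrow>\<^sub>L 'y"
    and R :: "complex \<Rightarrow> ('y \<Rightarrow>\<^sub>L 'x)"
    and T :: "int \<Rightarrow> ('y \<Rightarrow>\<^sub>L 'x)"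
    and \<epsilon> \<theta> :: real
    and M :: "'a measure"
    and n :: "int \<Rightarrow> 'a \<Rightarrow> 'x"
    and x :: "int \<Rightarrow> 'a \<Rightarrow> 'x"
    and c :: "'a \<Rightarrow> 'x"
  defines "A \<equiv> (\<lambda>z. A0 + cscale_op JY z A1)"
    and "U \<equiv> (\<lambda>s::nat. - (op_pow (op_inv (id_blinfun - (T (-1) o\<^sub>L (A0 + A1)))) (s + 1) o\<^sub>L T (-1)))"
    and "V \<equiv> (\<lambda>s::nat. ((-1::real) ^ s) *\<^sub>R
              (op_pow (op_inv (id_blinfun - (T 0 o\<^sub>L A1))) (s + 1) o\<^sub>L op_pow (T 0 o\<^sub>L A1) s o\<^sub>L T 0))"
    and "g \<equiv> (\<lambda>\<omega> t. blinfun_apply F0 (n t \<omega>) + blinfun_apply F1 (n (t - 1) \<omega>))"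
  assumes JX: "complex_structure JX" and JY: "complex_structure JY"
    and A0: "clinear_op JX JY A0" and A1: "clinear_op JX JY A1"
    and F0: "clinear_op JX JY F0" and F1: "clinear_op JX JY F1"
    and eps: "\<epsilon> > 0" and theta: "\<theta> > 0"
    and inv: "\<forall>z \<in> V_set \<epsilon> \<union> W_set \<theta>. R z o\<^sub>L A z = id_blinfun \<and> A z o\<^sub>L R z = id_blinfun"
    and analytic: "op_analytic_on JX R (V_set \<epsilon> \<union> W_set \<theta>)"
    and laurent: "\<forall>z. 0 < cmod (z - 1) \<and> cmod (z - 1) < \<epsilon> \<longrightarrow>
                    ((\<lambda>j. cscale_op JX ((z - 1) powi j) (T j)) has_sum R z) UNIV"
    and prob: "prob_space M"
    and n_meas: "\<forall>t. bochner_measurable M (n t)"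
    and n_indep: "prob_space.indep_vars M (\<lambda>_. borel) n UNIV"
    and n_ident: "\<forall>t. distr M borel (n t) = distr M borel (n 0)"
    and n_sq: "\<forall>t. integrable M (\<lambda>\<omega>. (norm (n t \<omega>))\<^sup>2)"
    and n_mean: "\<forall>t. bochner_integral_is M (n t) 0"
    and x_rv: "\<forall>t \<ge> -1. bochner_measurable M (x t)"
    and x_init: "\<forall>\<omega> \<in> space M. x (-1) \<omega> = c \<omega>"
    and x_rec: "\<forall>\<omega> \<in> space M. \<forall>t \<ge> 0.
                  blinfun_apply A0 (x t \<omega>) + blinfun_apply A1 (x (t - 1) \<omega>) = g \<omega> t"
  shows "\<forall>\<omega> \<in> space M. \<forall>t::nat.
     summable (\<lambda>m. ((-1::real) ^ Suc m) *\<^sub>R blinfun_apply (T (- int (Suc m))) (nabla_neg (g \<omega>) (Suc m) t)) \<and>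
     summable (\<lambda>l. ((-1::real) ^ l) *\<^sub>R blinfun_apply (T (int l)) (nabla_pos_plus (g \<omega>) l t)) \<and>
     x (int t) \<omega> =
       (\<Sum>m. ((-1::real) ^ Suc m) *\<^sub>R blinfun_apply (T (- int (Suc m))) (nabla_neg (g \<omega>) (Suc m) t))
       - blinfun_apply (U t) (blinfun_apply A1 (c \<omega>))
       + (\<Sum>l. ((-1::real) ^ l) *\<^sub>R blinfun_apply (T (int l)) (nabla_pos_plus (g \<omega>) l t))
       - blinfun_apply (V t) (blinfun_apply A1 (c \<omega>))"
proof -
  interpret resolvent_laurent JX JY A0 A1 R T \<epsilon> \<theta>
    using JX JY A0 A1 eps theta inv analytic laurent by unfold_locales (simp_all add: A_def)
  have coeffs: "U t = sing_coeff t" "V t = reg_coeff t" for t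
    unfolding U_def V_def sing_coeff_eq reg_coeff_eq by simp_all
  show ?thesis
    unfolding coeffs by (intro ballI allI conjI solution_eq_series) (use x_init x_rec in auto)
qed

end
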